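(* Let $k\ge 2$ be an even integer, and let $S_k$ (a set of $2k+1$ points) and $\mathcal D$ (a set of $k$ directions) be as defined in the context. Then the unique minimum-length $\mathcal D$-monotone geometric spanning tree of $S_k$ is the star $T^\star$ with center $o$ and edges $ov_0,\dots,ov_{2k-1}$; in particular its maximum degree is $\deg_{T^\star}(o)=2k$.
   Context: Let $k\ge 2$ be even. Let $\mathcal D=\{d_1,\dots,d_k\}$ where $d_i=(\cos((i-1)\pi/k),\sin((i-1)\pi/k))$, so consecutive directions differ by angle $\pi/k$. The lines through the origin $o$ orthogonal to the $d_i$ partition the plane into $2k$ wedges $W_0,\dots,W_{2k-1}$, where (since $k$ is even) $W_i$ is the wedge of polar angles in $[i\pi/k,(i+1)\pi/k]$. Let $S_k=\{o\}\cup\{v_0,\dots,v_{2k-1}\}$, where $v_i$ is the point on the unit circle at polar angle $i\pi/k+\frac{2\pi}{3k}$ (the second angle-trisector of $W_i$ in counterclockwise order); thus $v_0,\dots,v_{2k-1}$ form a regular $2k$-gon centered at $o$, and these are called polygon vertices. A geometric path $\langle p_1,\dots,p_r\rangle$ is $d$-monotone if no two of its vertices lie on a common line orthogonal to $d$ and $\langle p_1,d\rangle,\dots,\langle p_r,d\rangle$ is strictly increasing or strictly decreasing. A geometric spanning tree of $S$ is a tree with vertex set $S$ whose edges are straight segments; its length is the sum of Euclidean edge lengths; it is $\mathcal D$-monotone if for every pair of vertices $u,v$ there is $d\in\mathcal D$ with the tree path from $u$ to $v$ $d$-monotone. *)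

theory Defs
  imports "HOL-Analysis.Analysis"
begin

type_synonym pt = "real \<times> real"

definition dirs :: "nat \<Rightarrow> pt set" where
  "dirs k = {(cos (real (i - 1) * pi / real k), sin (real (i - 1) * pi / real k)) | i. i \<in> {1..k}}"

definition polyv :: "nat \<Rightarrow> nat \<Rightarrow> pt" where
  "polyv k i = (cos (real i * pi / real k + 2 * pi / (3 * real k)),
                sin (real i * pi / real k + 2 * pi / (3 * real k)))"

definition Sk :: "nat \<Rightarrow> pt set" where
  "Sk k = insert (0,0) (polyv k ` {..<2*k})"

definition is_graph :: "pt set \<Rightarrow> pt set set \<Rightarrow> bool" where
  "is_graph S E \<longleftrightarrow> (\<forall>e\<in>E. \<exists>a b. e = {a, b} \<and> a \<in> S \<and> b \<in> S \<and> a \<noteq> b)"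

definition is_path :: "pt set \<Rightarrow> pt set set \<Rightarrow> pt list \<Rightarrow> pt \<Rightarrow> pt \<Rightarrow> bool" where
  "is_path S E ps u v \<longleftrightarrow> ps \<noteq> [] \<and> hd ps = u \<and> last ps = v \<and> distinct ps \<and> set ps \<subseteq> S \<and>
     (\<forall>i. Suc i < length ps \<longrightarrow> {ps ! i, ps ! Suc i} \<in> E)"

definition is_cycle :: "pt set \<Rightarrow> pt set set \<Rightarrow> pt list \<Rightarrow> bool" where
  "is_cycle S E cs \<longleftrightarrow> length cs \<ge> 3 \<and> distinct cs \<and> set cs \<subseteq> S \<and>
     (\<forall>i. Suc i < length cs \<longrightarrow> {cs ! i, cs ! Suc i} \<in> E) \<and> {last cs, hd cs} \<in> E"

definition spanning_tree :: "pt set \<Rightarrow> pt set set \<Rightarrow> bool" where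
  "spanning_tree S E \<longleftrightarrow> is_graph S E \<and>
     (\<forall>u\<in>S. \<forall>v\<in>S. \<exists>ps. is_path S E ps u v) \<and> (\<nexists>cs. is_cycle S E cs)"

definition monotone_path :: "pt \<Rightarrow> pt list \<Rightarrow> bool" where
  "monotone_path d ps \<longleftrightarrow>
     sorted_wrt (<) (map (\<lambda>p. inner p d) ps) \<or> sorted_wrt (>) (map (\<lambda>p. inner p d) ps)"

definition Dmonotone :: "pt set \<Rightarrow> pt set \<Rightarrow> pt set set \<Rightarrow> bool" where
  "Dmonotone D S E \<longleftrightarrow> (\<forall>u\<in>S. \<forall>v\<in>S. \<exists>d\<in>D. \<forall>ps. is_path S E ps u v \<longrightarrow> monotone_path d ps)"

definition tree_length :: "pt set set \<Rightarrow> real" where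
  "tree_length E = (\<Sum>e\<in>E. diameter e)"

definition star :: "nat \<Rightarrow> pt set set" where
  "star k = {{(0,0), polyv k i} | i. i < 2*k}"

definition degree :: "pt set set \<Rightarrow> pt \<Rightarrow> nat" where
  "degree E x = card {e\<in>E. x \<in> e}"

end

theory Submission
  imports Defs
begin

text \<open>
  Root a \<open>\<D>\<close>-monotone spanning tree at \<open>o\<close> and group the polygon vertices into branches according
  to the neighbour of \<open>o\<close> through which their tree path reaches \<open>o\<close>. Comparing projections of polygon
  vertices onto the directions of \<open>\<D>\<close> shows that a branch with more than one vertex consists of \<open>k\<close>
  consecutive vertices \<open>c, c - 1, \<dots>, c - (k - 1)\<close> and is the path that visits them in zigzag order,
  starting from the middle vertex \<open>c - k/2\<close> and ending in \<open>c\<close>. Its edges are chords spanning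
  \<open>1, \<dots>, k - 1\<close> polygon steps, so together with the edge \<open>co\<close> it has length
  \<open>1 + \<Sum>\<^sub>n 2 sin(n\<pi>/2k) > k\<close>. Charging every polygon vertex the edge to its parent, each branch
  thus costs at least its number of vertices, with equality only for a single vertex adjacent to \<open>o\<close>;
  so every other \<open>\<D>\<close>-monotone spanning tree is longer than the star, whose length is \<open>2k\<close>.
\<close>

section \<open>Cosines in units of \<open>\<pi>/(3k)\<close>\<close>

definition unit_cos :: "nat \<Rightarrow> int \<Rightarrow> real" where
  "unit_cos k a = cos (of_int a * pi / (3 * real k))"

lemma unit_cos_add_period: "0 < k \<Longrightarrow> unit_cos k (a + 6 * int k * q) = unit_cos k a"
proof -
  assume "0 < k"
  then have "of_int (a + 6 * int k * q) * pi / (3 * real k) = of_int a * pi / (3 * real k) + (2 * pi) * of_int q"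
    by (simp add: field_simps)
  then show ?thesis unfolding unit_cos_def by (simp add: cos_add)
qed

lemma unit_cos_add_half_period: "0 < k \<Longrightarrow> unit_cos k (a + 3 * int k) = - unit_cos k a"
proof -
  assume "0 < k"
  then have "of_int (a + 3 * int k) * pi / (3 * real k) = of_int a * pi / (3 * real k) + pi"
    by (simp add: field_simps)
  then show ?thesis unfolding unit_cos_def by simp
qed

lemma unit_cos_minus: "unit_cos k (- a) = unit_cos k a"
  unfolding unit_cos_def by (simp add: minus_divide_left[symmetric])

lemma unit_cos_abs: "unit_cos k \<bar>a\<bar> = unit_cos k a"
  unfolding unit_cos_def by (cases "0 \<le> a") (auto simp: minus_divide_left[symmetric])

lemma unit_cos_as_angle:
  assumes "0 < k" "\<bar>a\<bar> \<le> 3 * int k"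
  shows "unit_cos k a = cos (of_int \<bar>a\<bar> * pi / (3 * real k))"
    and "0 \<le> of_int \<bar>a\<bar> * pi / (3 * real k)" "of_int \<bar>a\<bar> * pi / (3 * real k) \<le> pi"
proof -
  show "unit_cos k a = cos (of_int \<bar>a\<bar> * pi / (3 * real k))" by (metis unit_cos_abs unit_cos_def)
  have "of_int \<bar>a\<bar> * pi \<le> 3 * real k * pi"
    using assms(2) pi_ge_zero by (intro mult_right_mono) linarith+
  then show "of_int \<bar>a\<bar> * pi / (3 * real k) \<le> pi" using assms(1) by (simp add: divide_le_eq)
qed simp

lemma unit_cos_less_iff:
  assumes "0 < k" "\<bar>a\<bar> \<le> 3 * int k" "\<bar>b\<bar> \<le> 3 * int k"
  shows "unit_cos k a < unit_cos k b \<longleftrightarrow> \<bar>b\<bar> < \<bar>a\<bar>"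
proof -
  have "unit_cos k a < unit_cos k b \<longleftrightarrow> of_int \<bar>b\<bar> * pi / (3 * real k) < of_int \<bar>a\<bar> * pi / (3 * real k)"
    using unit_cos_as_angle[OF assms(1,2)] unit_cos_as_angle[OF assms(1,3)] by (simp add: cos_mono_less_eq)
  also have "\<dots> \<longleftrightarrow> \<bar>b\<bar> < \<bar>a\<bar>"
    using assms(1) by (simp add: divide_less_cancel flip: of_int_abs)
  finally show ?thesis .
qed

lemma unit_cos_sign:
  assumes "0 < k" "\<bar>a\<bar> \<le> 3 * int k"
  shows "0 < unit_cos k a \<longleftrightarrow> 2 * \<bar>a\<bar> < 3 * int k"
    and "unit_cos k a < 0 \<longleftrightarrow> 3 * int k < 2 * \<bar>a\<bar>"
proof -
  define \<theta> where "\<theta> = of_int \<bar>a\<bar> * pi / (3 * real k)"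
  note \<theta> = unit_cos_as_angle[OF assms, folded \<theta>_def]
  have "\<theta> < pi / 2 \<longleftrightarrow> 2 * of_int \<bar>a\<bar> < 3 * real k" "pi / 2 < \<theta> \<longleftrightarrow> 3 * real k < 2 * of_int \<bar>a\<bar>"
    using assms(1) unfolding \<theta>_def by (simp_all add: field_simps)
  moreover have "2 * \<bar>a\<bar> < 3 * int k \<longleftrightarrow> 2 * of_int \<bar>a\<bar> < 3 * real k"
    "3 * int k < 2 * \<bar>a\<bar> \<longleftrightarrow> 3 * real k < 2 * of_int \<bar>a\<bar>"
    using of_int_less_iff[where 'a=real, of "2 * \<bar>a\<bar>" "3 * int k"]
      of_int_less_iff[where 'a=real, of "3 * int k" "2 * \<bar>a\<bar>"]
    by (simp_all only: of_int_mult of_int_numeral of_int_of_nat_eq)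
  ultimately have less: "\<theta> < pi / 2 \<longleftrightarrow> 2 * \<bar>a\<bar> < 3 * int k"
    and greater: "pi / 2 < \<theta> \<longleftrightarrow> 3 * int k < 2 * \<bar>a\<bar>" by simp_all
  show "0 < unit_cos k a \<longleftrightarrow> 2 * \<bar>a\<bar> < 3 * int k"
    using cos_mono_less_eq[of "pi/2" \<theta>] \<theta> less by simp
  show "unit_cos k a < 0 \<longleftrightarrow> 3 * int k < 2 * \<bar>a\<bar>"
    using cos_mono_less_eq[of \<theta> "pi/2"] \<theta> greater by simp
qed

section \<open>Projections of polygon vertices onto directions\<close>

text \<open>The inner product of \<open>v\<^sub>x\<close> (polar angle \<open>(3x + 2)\<pi>/(3k)\<close>, index read modulo \<open>2k\<close>) with the
  direction of polar angle \<open>m\<pi>/k\<close>; see \<open>inner_vertex_dir\<close>.\<close>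
definition proj :: "nat \<Rightarrow> int \<Rightarrow> int \<Rightarrow> real" where
  "proj k m x = unit_cos k (3 * x + 2 - 3 * m)"

lemma proj_window:
  assumes "0 < k"
  obtains t :: int and up :: bool where "L \<le> t" "t < L + int k"
    and "\<And>x. proj k m x = (if up then 1 else -1) * unit_cos k (3 * (x - c + t) + 2)"
proof -
  define r where "r = (c - m - L) mod (2 * int k)"
  define q where "q = (c - m - L) div (2 * int k)"
  have r: "0 \<le> r" "r < 2 * int k" using assms by (auto simp: r_def)
  have cm: "c - m = L + r + 2 * int k * q" unfolding r_def q_def by simp
  show thesis
  proof (cases "r < int k")
    case True
    show thesis
    proof (rule that[of "L + r" True])
      fix x
      have "3 * x + 2 - 3 * m = (3 * (x - c + (L + r)) + 2) + 6 * int k * q"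
        using cm by (simp add: algebra_simps)
      then show "proj k m x = (if True then 1 else -1) * unit_cos k (3 * (x - c + (L + r)) + 2)"
        unfolding proj_def by (simp only: unit_cos_add_period[OF assms]) simp
    qed (use r True in auto)
  next
    case False
    show thesis
    proof (rule that[of "L + r - int k" False])
      fix x
      have "3 * x + 2 - 3 * m = ((3 * (x - c + (L + r - int k)) + 2) + 3 * int k) + 6 * int k * q"
        using cm by (simp add: algebra_simps)
      then show "proj k m x = (if False then 1 else -1) * unit_cos k (3 * (x - c + (L + r - int k)) + 2)"
        unfolding proj_def
        by (simp only: unit_cos_add_period[OF assms] unit_cos_add_half_period[OF assms]) simp
    qed (use r False in auto)
  qed
qed

lemma abs_3_2_less_iff: "\<bar>3 * u + 2\<bar> < \<bar>3 * v + 2\<bar> \<longleftrightarrow> (u < v \<and> -1 \<le> u + v) \<or> (v < u \<and> u + v \<le> -2)"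
  for u v :: int
  by (cases "0 \<le> 3 * u + 2"; cases "0 \<le> 3 * v + 2") auto

lemma unit_cos_window_less_iff:
  assumes "0 < k" "- int k \<le> u" "u < int k" "- int k \<le> v" "v < int k"
  shows "unit_cos k (3 * u + 2) < unit_cos k (3 * v + 2) \<longleftrightarrow> (v < u \<and> -1 \<le> u + v) \<or> (u < v \<and> u + v \<le> -2)"
proof -
  have "\<bar>3 * u + 2\<bar> \<le> 3 * int k" "\<bar>3 * v + 2\<bar> \<le> 3 * int k"
    using assms by (simp_all add: abs_le_iff)
  then show ?thesis
    using unit_cos_less_iff[OF assms(1), of "3 * u + 2" "3 * v + 2"] abs_3_2_less_iff[of v u]
    by (simp add: add.commute)
qed

lemma unit_cos_window_sign:
  assumes "0 < k" "int k = 2 * h" "- int k \<le> u" "u < int k"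
  shows "unit_cos k (3 * u + 2) < 0 \<longleftrightarrow> u < - h \<or> h \<le> u" "0 < unit_cos k (3 * u + 2) \<longleftrightarrow> - h \<le> u \<and> u < h"
proof -
  have "\<bar>3 * u + 2\<bar> \<le> 3 * int k" using assms by (simp add: abs_le_iff)
  then show "unit_cos k (3 * u + 2) < 0 \<longleftrightarrow> u < - h \<or> h \<le> u" "0 < unit_cos k (3 * u + 2) \<longleftrightarrow> - h \<le> u \<and> u < h"
    using unit_cos_sign[OF assms(1), of "3 * u + 2"] assms(2) by auto
qed

text \<open>Up to a sign and a shift \<open>t\<close> of the index, the projections of a window of \<open>2k\<close> consecutive
  vertices are \<open>cos((3u + 2)\<pi>/(3k))\<close> with \<open>-k \<le> u < k\<close>, which decreases in \<open>\<bar>3u + 2\<bar>\<close>. This turns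
  every comparison of projections below into linear integer arithmetic.\<close>
lemma proj_window_order:
  assumes "0 < k" "int k = 2 * h"
  obtains (window) t :: int and up :: bool where "L \<le> t" "t < L + int k"
    and "\<And>x. proj k m x = (if up then 1 else -1) * unit_cos k (3 * (x - c + t) + 2)"
    and "\<And>x y. - int k \<le> x - c + t \<Longrightarrow> x - c + t < int k \<Longrightarrow> - int k \<le> y - c + t \<Longrightarrow> y - c + t < int k \<Longrightarrow>
      proj k m x < proj k m y \<longleftrightarrow>
        (if up then (y < x \<and> -1 \<le> (x - c + t) + (y - c + t)) \<or> (x < y \<and> (x - c + t) + (y - c + t) \<le> -2)
         else (x < y \<and> -1 \<le> (x - c + t) + (y - c + t)) \<or> (y < x \<and> (x - c + t) + (y - c + t) \<le> -2))"
    and "\<And>x. - int k \<le> x - c + t \<Longrightarrow> x - c + t < int k \<Longrightarrow>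
      proj k m x < 0 \<longleftrightarrow> (up \<longleftrightarrow> x - c + t < - h \<or> h \<le> x - c + t)"
    and "\<And>x. - int k \<le> x - c + t \<Longrightarrow> x - c + t < int k \<Longrightarrow>
      0 < proj k m x \<longleftrightarrow> (up \<longleftrightarrow> - h \<le> x - c + t \<and> x - c + t < h)"
proof -
  obtain t up where t: "L \<le> t" "t < L + int k"
    and P: "\<And>x. proj k m x = (if up then 1 else -1) * unit_cos k (3 * (x - c + t) + 2)"
    using proj_window[OF assms(1), of L m c] by blast
  note ord = unit_cos_window_less_iff[OF assms(1)] and sign = unit_cos_window_sign[OF assms]
  show thesis
  proof (rule window[OF t P])
    fix x y
    assume "- int k \<le> x - c + t" "x - c + t < int k" "- int k \<le> y - c + t" "y - c + t < int k"
    then show "proj k m x < proj k m y \<longleftrightarrow>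
        (if up then (y < x \<and> -1 \<le> (x - c + t) + (y - c + t)) \<or> (x < y \<and> (x - c + t) + (y - c + t) \<le> -2)
         else (x < y \<and> -1 \<le> (x - c + t) + (y - c + t)) \<or> (y < x \<and> (x - c + t) + (y - c + t) \<le> -2))"
      using ord[of "x - c + t" "y - c + t"] ord[of "y - c + t" "x - c + t"] unfolding P by auto
  next
    fix x
    assume "- int k \<le> x - c + t" "x - c + t < int k"
    then show "proj k m x < 0 \<longleftrightarrow> (up \<longleftrightarrow> x - c + t < - h \<or> h \<le> x - c + t)"
      and "0 < proj k m x \<longleftrightarrow> (up \<longleftrightarrow> - h \<le> x - c + t \<and> x - c + t < h)"
      using sign[of "x - c + t"] unfolding P by auto
  qed
qed

lemma proj_eq_unit_cos: "0 < k \<Longrightarrow> x - m = u + 2 * int k * q \<Longrightarrow> proj k m x = unit_cos k (3 * u + 2)"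
  unfolding proj_def using unit_cos_add_period[of k "3 * u + 2" q] by (simp add: algebra_simps)

lemma proj_periodic: "0 < k \<Longrightarrow> proj k m (x + 2 * int k * q) = proj k m x"
  unfolding proj_def using unit_cos_add_period[of k "3 * x + 2 - 3 * m" q] by (simp add: algebra_simps)

lemma proj_sign_zones:
  assumes "0 < k" "int k = 2 * h"
  shows "- h \<le> u \<Longrightarrow> u < h \<Longrightarrow> 0 < proj k m (m + u + 2 * int k * q)"
    and "h \<le> u \<Longrightarrow> u < int k + h \<Longrightarrow> proj k m (m + u + 2 * int k * q) < 0"
proof -
  show "0 < proj k m (m + u + 2 * int k * q)" if "- h \<le> u" "u < h"
    using proj_eq_unit_cos[OF assms(1), of "m + u + 2 * int k * q" m u q] that assms(2)
      unit_cos_sign(1)[OF assms(1), of "3 * u + 2"] by simp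
  assume u: "h \<le> u" "u < int k + h"
  show "proj k m (m + u + 2 * int k * q) < 0"
  proof (cases "u < int k")
    case True
    then show ?thesis using proj_eq_unit_cos[OF assms(1), of "m + u + 2 * int k * q" m u q] u assms(2)
        unit_cos_sign(2)[OF assms(1), of "3 * u + 2"] by simp
  next
    case False
    have "m + u + 2 * int k * q - m = (u - 2 * int k) + 2 * int k * (q + 1)" by (simp add: algebra_simps)
    then show ?thesis using proj_eq_unit_cos[OF assms(1), of "m + u + 2 * int k * q" m "u - 2 * int k" "q + 1"]
        False u assms(2) unit_cos_sign(2)[OF assms(1), of "3 * (u - 2 * int k) + 2"] by simp
  qed
qed

lemma proj_dir_representative:
  assumes "0 < k"
  obtains m' :: int and \<sigma> :: real where "0 \<le> m'" "m' < int k" "\<sigma> = 1 \<or> \<sigma> = -1"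
    "\<And>x. proj k m' x = \<sigma> * proj k m x"
proof -
  define r where "r = m mod (2 * int k)"
  have r: "0 \<le> r" "r < 2 * int k" unfolding r_def using assms by simp_all
  have p: "proj k r x = proj k m x" for x
    unfolding proj_def r_def using unit_cos_add_period[OF assms, of "3 * x + 2 - 3 * m" "m div (2 * int k)"]
    by (simp add: algebra_simps minus_div_mult_eq_mod[symmetric])
  show thesis
  proof (cases "r < int k")
    case True
    then show thesis using that[of r 1] r p by simp
  next
    case False
    have "proj k (r - int k) x = - proj k r x" for x
      unfolding proj_def using unit_cos_add_half_period[OF assms, of "3 * x + 2 - 3 * r"]
      by (simp add: algebra_simps)
    then show thesis using that[of "r - int k" "-1"] r False p by simp
  qed
qed

lemma proj_opposite_signs:
  assumes "0 < k" "int k = 2 * h" "(y - x) mod (2 * int k) \<noteq> 0"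
  obtains m where "0 \<le> m" "m < int k" "proj k m x * proj k m y < 0"
proof -
  define g where "g = (y - x) mod (2 * int k)"
  have "0 \<le> g" "g < 2 * int k" "g \<noteq> 0" using assms unfolding g_def by simp_all
  then have g: "1 \<le> g" "g < 2 * int k" by simp_all
  define u where "u = (if g \<le> int k then h - 1 else - h)"
  define m where "m = x - u"
  have "x = m + u + 2 * int k * 0" "y = m + (u + g) + 2 * int k * ((y - x) div (2 * int k))"
    unfolding m_def g_def by simp_all
  moreover have "- h \<le> u" "u < h" "h \<le> u + g" "u + g < int k + h"
    using g assms(2) unfolding u_def by auto
  ultimately have "0 < proj k m x" "proj k m y < 0" using proj_sign_zones[OF assms(1,2)] by metis+
  then have pq: "proj k m x * proj k m y < 0" by (simp add: mult_pos_neg)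
  obtain m' \<sigma> where "0 \<le> m'" "m' < int k" "\<sigma> = 1 \<or> \<sigma> = -1" "\<And>z. proj k m' z = \<sigma> * proj k m z"
    using proj_dir_representative[OF assms(1), where m = m] by blast
  then show thesis using that[of m'] pq by auto
qed

lemma proj_nonzero:
  assumes "0 < k" "int k = 2 * h"
  shows "proj k m x \<noteq> 0"
  using assms
proof (cases rule: proj_window_order[where L = "-1" and m = m and c = x])
  case (window t up)
  from window(5,6)[of x] show ?thesis using assms window(1,2) by smt
qed

text \<open>Increasing projections along a path \<open>v\<^sub>y \<rightarrow> v\<^sub>c \<rightarrow> o (\<rightarrow> v\<^sub>w)\<close> through a neighbour \<open>v\<^sub>c\<close> of \<open>o\<close>:
  the first four configurations are impossible, the last one determines the direction. Evenness
  of \<open>k\<close> is essential.\<close>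
lemma no_increasing_antipodal_to_root:
  assumes "0 < k" "int k = 2 * h" "int k - 1 \<le> j" "j \<le> int k"
  shows "\<not> (proj k m (c + j) < proj k m c \<and> proj k m c < 0)"
  using assms(1,2)
proof (cases rule: proj_window_order[where L = "- int k" and m = m and c = c])
  case (window t up)
  from window(4)[of "c + j" c] window(5)[of c] show ?thesis
    using assms window(1,2) by smt
qed

lemma no_increasing_ccw_crossing:
  assumes "0 < k" "int k = 2 * h" "1 \<le> j" "j \<le> int k - 2"
  shows "\<not> (proj k m (c + j) < proj k m c \<and> proj k m c < 0 \<and> 0 < proj k m (c + j + 1))"
  using assms(1,2)
proof (cases rule: proj_window_order[where L = "- int k" and m = m and c = c])
  case (window t up)
  from window(4)[of "c + j" c] window(5)[of c] window(6)[of "c + j + 1"] show ?thesis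
    using assms window(1,2) by smt
qed

lemma no_increasing_cw_crossing:
  assumes "0 < k" "int k = 2 * h" "1 \<le> j" "j \<le> int k - 2"
  shows "\<not> (proj k m (c - j) < proj k m c \<and> proj k m c < 0 \<and> 0 < proj k m (c - j - 1))"
  using assms(1,2)
proof (cases rule: proj_window_order[where L = "-1" and m = m and c = c])
  case (window t up)
  from window(4)[of "c - j" c] window(5)[of c] window(6)[of "c - j - 1"] show ?thesis
    using assms window(1,2) by smt
qed

lemma no_increasing_far_cw_crossing:
  assumes "0 < k" "int k = 2 * h" "1 \<le> j" "j \<le> int k - 2"
  shows "\<not> (proj k m (c - (int k - 1)) < proj k m c \<and> proj k m c < 0 \<and> 0 < proj k m (c - j))"
  using assms(1,2)
proof (cases rule: proj_window_order[where L = "-1" and m = m and c = c])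
  case (window t up)
  from window(4)[of "c - (int k - 1)" c] window(5)[of c] window(6)[of "c - j"] show ?thesis
    using assms window(1,2) by smt
qed

lemma cw_crossing_direction:
  assumes "0 < k" "int k = 2 * h" "1 \<le> j" "j \<le> int k - 1"
    and "proj k m (c - j) < proj k m c" "proj k m c < 0" "0 < proj k m (c + 1)"
  shows "proj k m x = - unit_cos k (3 * (x - c) + 3 * h - 1)"
  using assms(1,2)
proof (cases rule: proj_window_order[where L = "-1" and m = m and c = c])
  case (window t up)
  from window(4)[of "c - j" c] window(5)[of c] window(6)[of "c + 1"] have "\<not> up \<and> t = h - 1"
    using assms window(1,2) by smt
  then have "\<not> up" "t = h - 1" by auto
  then show ?thesis unfolding window(3)[of x] \<open>t = h - 1\<close> by (simp add: algebra_simps)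
qed

section \<open>The zigzag order\<close>

text \<open>\<open>zigzag 1, 2, 3, 4, 5, \<dots> = 0, -1, 1, -2, 2, \<dots>\<close>, so \<open>c - h - zigzag q\<close> for \<open>q = 1, \<dots>, 2h\<close>
  visits \<open>c - (2h - 1), \<dots>, c\<close> outward from the middle vertex \<open>c - h\<close>.\<close>
definition zigzag :: "nat \<Rightarrow> int" where
  "zigzag n = (if odd n then int ((n - 1) div 2) else - int (n div 2))"

lemma zigzag_around:
  assumes "2 \<le> n"
  shows "\<exists>r. n = 2 * r \<and> zigzag (n - 2) = 1 - int r \<and> zigzag (n - 1) = int r - 1
      \<and> zigzag n = - int r \<and> zigzag (n + 1) = int r
    \<or> n = 2 * r + 1 \<and> zigzag (n - 2) = int r - 1 \<and> zigzag (n - 1) = - int r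
      \<and> zigzag n = int r \<and> zigzag (n + 1) = - int r - 1"
proof (cases "even n")
  case True
  then obtain r where "n = 2 * r" by blast
  with assms show ?thesis by (intro exI[of _ r]) (auto simp: zigzag_def)
next
  case False
  then obtain r where "n = 2 * r + 1" by (blast elim: oddE)
  with assms show ?thesis by (intro exI[of _ r]) (auto simp: zigzag_def)
qed

lemma zigzag_bounds: "1 \<le> q \<Longrightarrow> q \<le> p \<Longrightarrow> - int p \<le> 2 * zigzag q \<and> 2 * zigzag q \<le> int p - 1"
  unfolding zigzag_def by auto

lemma zigzag_double: "zigzag (2 * r) = - int r"
  unfolding zigzag_def by simp

lemma zigzag_surj:
  assumes "int k = 2 * h" "- h \<le> d" "d \<le> h - 1"
  obtains n where "1 \<le> n" "n \<le> k" "zigzag n = d"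
proof (cases "0 \<le> d")
  case True
  then show thesis using assms by (intro that[of "2 * nat d + 1"]) (auto simp: zigzag_def)
next
  case False
  then show thesis using assms by (intro that[of "2 * nat (- d)"]) (auto simp: zigzag_def)
qed

lemma zigzag_abs_mono:
  assumes "1 \<le> a" "a < b"
  shows "\<bar>3 * zigzag a + 1\<bar> < \<bar>3 * zigzag b + 1\<bar>"
  using assms unfolding zigzag_def by (auto elim!: evenE oddE)

lemma zigzag_Suc_diff: "1 \<le> n \<Longrightarrow> \<bar>zigzag (Suc n) - zigzag n\<bar> = int n"
  unfolding zigzag_def by (auto elim!: evenE oddE)

lemma no_increasing_offsets_1_3_2:
  assumes "0 < k" "int k = 2 * h" "2 \<le> h"
  shows "\<not> (proj k m (c - h) < proj k m (c - h - 1) \<and> proj k m (c - h - 1) < proj k m (c - h + 1))"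
  using assms(1,2)
proof (cases rule: proj_window_order[where L = "-1" and m = m and c = c])
  case (window t up)
  from window(4)[of "c - h" "c - h - 1"] window(4)[of "c - h - 1" "c - h + 1"] show ?thesis
    using assms window(1,2) by smt
qed

text \<open>Here \<open>a, e, d, b\<close> stand for the zigzag values at \<open>n - 2, n - 1, n, n + 1\<close>, where \<open>n = 2r\<close>
  or \<open>n = 2r + 1\<close>.\<close>
lemma
  assumes "0 < k" "int k = 2 * h" "r \<le> h - 1"
    and "a = 1 - r \<and> e = r - 1 \<and> d = - r \<and> b = r \<and> 2 \<le> r
       \<or> a = r - 1 \<and> e = - r \<and> d = r \<and> b = - r - 1 \<and> 1 \<le> r"
  shows no_increasing_offsets_m2_p1_0:
      "\<not> (proj k m (c - h - a) < proj k m (c - h - b) \<and> proj k m (c - h - b) < proj k m (c - h - d))"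
    and no_increasing_offsets_m2_0_p1_m1:
      "\<not> (proj k m (c - h - a) < proj k m (c - h - d) \<and> proj k m (c - h - d) < proj k m (c - h - b)
        \<and> proj k m (c - h - b) < proj k m (c - h - e))"
    and no_increasing_offsets_m2_m1_p1_0:
      "\<not> (proj k m (c - h - a) < proj k m (c - h - e) \<and> proj k m (c - h - e) < proj k m (c - h - b)
        \<and> proj k m (c - h - b) < proj k m (c - h - d))"
proof -
  let ?p = "\<lambda>x. proj k m (c - h - x)"
  have "\<not> (?p a < ?p b \<and> ?p b < ?p d) \<and> \<not> (?p a < ?p d \<and> ?p d < ?p b \<and> ?p b < ?p e)
    \<and> \<not> (?p a < ?p e \<and> ?p e < ?p b \<and> ?p b < ?p d)"
    using assms(1,2)
  proof (cases rule: proj_window_order[where L = "-1" and m = m and c = c])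
    case (window t up)
    note order = window(4)[of "c - h - a" "c - h - b"] window(4)[of "c - h - b" "c - h - d"]
      window(4)[of "c - h - a" "c - h - d"] window(4)[of "c - h - d" "c - h - b"] window(4)[of "c - h - b" "c - h - e"]
      window(4)[of "c - h - a" "c - h - e"] window(4)[of "c - h - e" "c - h - b"]
    have "\<not> (?p a < ?p b \<and> ?p b < ?p d)" using order(1,2) assms window(1,2) by smt
    moreover have "\<not> (?p a < ?p d \<and> ?p d < ?p b \<and> ?p b < ?p e)" using order(3-5) assms window(1,2) by smt
    moreover have "\<not> (?p a < ?p e \<and> ?p e < ?p b \<and> ?p b < ?p d)" using order(6,7,2) assms window(1,2) by smt
    ultimately show ?thesis by blast
  qed
  then show "\<not> (?p a < ?p b \<and> ?p b < ?p d)" "\<not> (?p a < ?p d \<and> ?p d < ?p b \<and> ?p b < ?p e)"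
    "\<not> (?p a < ?p e \<and> ?p e < ?p b \<and> ?p b < ?p d)" by blast+
qed

lemma no_increasing_offsets_q_p1_0_m1:
  assumes "0 < k" "int k = 2 * h" "1 \<le> r" "r \<le> h - 1"
    and "e = r - 1 \<and> d = - r \<and> b = r \<and> 1 - r \<le> z \<and> z \<le> r - 2
       \<or> e = - r \<and> d = r \<and> b = - r - 1 \<and> 1 - r \<le> z \<and> z \<le> r - 1"
  shows "\<not> (proj k m (c - h - z) < proj k m (c - h - b) \<and> proj k m (c - h - b) < proj k m (c - h - d)
    \<and> proj k m (c - h - d) < proj k m (c - h - e))"
  using assms(1,2)
proof (cases rule: proj_window_order[where L = "-1" and m = m and c = c])
  case (window t up)
  from window(4)[of "c - h - z" "c - h - b"] window(4)[of "c - h - b" "c - h - d"] window(4)[of "c - h - d" "c - h - e"]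
  show ?thesis using assms window(1,2) by smt
qed

lemma zigzag_not_increasing_1_3_2:
  assumes "0 < k" "int k = 2 * h" "3 \<le> k"
  shows "\<not> sorted_wrt (<) (map (\<lambda>q. proj k m (c - h - zigzag q)) [1, 3, 2])"
  using no_increasing_offsets_1_3_2[OF assms(1,2), of m c] assms(2,3) by (simp add: zigzag_def)

lemma
  assumes "0 < k" "int k = 2 * h" "3 \<le> n" "n \<le> k - 1"
  shows zigzag_not_increasing_m2_p1_0:
      "\<not> sorted_wrt (<) (map (\<lambda>q. proj k m (c - h - zigzag q)) [n - 2, n + 1, n])"
    and zigzag_not_increasing_m2_0_p1_m1:
      "\<not> sorted_wrt (<) (map (\<lambda>q. proj k m (c - h - zigzag q)) [n - 2, n, n + 1, n - 1])"
    and zigzag_not_increasing_m2_m1_p1_0: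
      "\<not> sorted_wrt (<) (map (\<lambda>q. proj k m (c - h - zigzag q)) [n - 2, n - 1, n + 1, n])"
proof -
  obtain r where "n = 2 * r \<and> zigzag (n - 2) = 1 - int r \<and> zigzag (n - 1) = int r - 1
      \<and> zigzag n = - int r \<and> zigzag (n + 1) = int r
    \<or> n = 2 * r + 1 \<and> zigzag (n - 2) = int r - 1 \<and> zigzag (n - 1) = - int r
      \<and> zigzag n = int r \<and> zigzag (n + 1) = - int r - 1"
    using zigzag_around[of n] assms(3) by auto
  then have "zigzag (n - 2) = 1 - int r \<and> zigzag (n - 1) = int r - 1 \<and> zigzag n = - int r
      \<and> zigzag (n + 1) = int r \<and> 2 \<le> int r
    \<or> zigzag (n - 2) = int r - 1 \<and> zigzag (n - 1) = - int r \<and> zigzag n = int r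
      \<and> zigzag (n + 1) = - int r - 1 \<and> 1 \<le> int r" "int r \<le> h - 1"
    using assms by auto
  note offsets = no_increasing_offsets_m2_p1_0[OF assms(1,2) this(2,1), where m = m and c = c]
    no_increasing_offsets_m2_0_p1_m1[OF assms(1,2) this(2,1), where m = m and c = c]
    no_increasing_offsets_m2_m1_p1_0[OF assms(1,2) this(2,1), where m = m and c = c]
  show "\<not> sorted_wrt (<) (map (\<lambda>q. proj k m (c - h - zigzag q)) [n - 2, n + 1, n])"
    using offsets(1) by auto
  show "\<not> sorted_wrt (<) (map (\<lambda>q. proj k m (c - h - zigzag q)) [n - 2, n, n + 1, n - 1])"
    using offsets(2) by auto
  show "\<not> sorted_wrt (<) (map (\<lambda>q. proj k m (c - h - zigzag q)) [n - 2, n - 1, n + 1, n])"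
    using offsets(3) by auto
qed

lemma zigzag_not_increasing_q_p1_0_m1:
  assumes "0 < k" "int k = 2 * h" "2 \<le> n" "n \<le> k - 1" "1 \<le> q" "q \<le> n - 2"
  shows "\<not> sorted_wrt (<) (map (\<lambda>q. proj k m (c - h - zigzag q)) [q, n + 1, n, n - 1])"
proof -
  obtain r where "n = 2 * r \<and> zigzag (n - 2) = 1 - int r \<and> zigzag (n - 1) = int r - 1
      \<and> zigzag n = - int r \<and> zigzag (n + 1) = int r
    \<or> n = 2 * r + 1 \<and> zigzag (n - 2) = int r - 1 \<and> zigzag (n - 1) = - int r
      \<and> zigzag n = int r \<and> zigzag (n + 1) = - int r - 1"
    using zigzag_around[of n] assms(3) by auto
  moreover have "- int (n - 2) \<le> 2 * zigzag q" "2 * zigzag q \<le> int (n - 2) - 1"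
    using zigzag_bounds[OF assms(5,6)] by auto
  ultimately show ?thesis
    using no_increasing_offsets_q_p1_0_m1[OF assms(1,2), of "int r" "zigzag (n - 1)" "zigzag n"
        "zigzag (n + 1)" "zigzag q" m c] assms
    by auto
qed

section \<open>Geometry of \<open>S\<^sub>k\<close>\<close>

definition dir :: "nat \<Rightarrow> int \<Rightarrow> pt" where
  "dir k m = (cos (of_int m * pi / real k), sin (of_int m * pi / real k))"

definition vertex :: "nat \<Rightarrow> int \<Rightarrow> pt" where
  "vertex k x = polyv k (nat (x mod (2 * int k)))"

lemma vertex_eq_polar:
  assumes "0 < k"
  shows "vertex k x = (cos (of_int (x mod (2 * int k)) * pi / real k + 2 * pi / (3 * real k)),
                       sin (of_int (x mod (2 * int k)) * pi / real k + 2 * pi / (3 * real k)))"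
proof -
  have "0 \<le> x mod (2 * int k)" using assms by simp
  then show ?thesis unfolding vertex_def polyv_def by simp
qed

lemma inner_vertex_dir:
  assumes "0 < k"
  shows "inner (vertex k x) (dir k m) = proj k m x"
proof -
  define r where "r = x mod (2 * int k)"
  have "inner (vertex k x) (dir k m) = cos ((of_int r * pi / real k + 2 * pi / (3 * real k)) - of_int m * pi / real k)"
    unfolding vertex_eq_polar[OF assms] dir_def r_def by (simp add: cos_diff)
  also have "(of_int r * pi / real k + 2 * pi / (3 * real k)) - of_int m * pi / real k
      = of_int (3 * r + 2 - 3 * m) * pi / (3 * real k)"
    using assms by (simp add: field_simps)
  also have "cos \<dots> = proj k m r" unfolding proj_def unit_cos_def ..
  also have "proj k m r = proj k m x"
    using proj_periodic[OF assms, of m r "x div (2 * int k)"] unfolding r_def by simp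
  finally show ?thesis .
qed

lemma inner_origin: "inner ((0, 0) :: pt) d = 0"
  by (cases d) simp

lemma dist_vertex_origin: "0 < k \<Longrightarrow> dist (vertex k x) (0, 0) = 1"
  unfolding vertex_eq_polar dist_Pair_Pair dist_real_def by simp

lemma vertex_neq_origin: "0 < k \<Longrightarrow> vertex k x \<noteq> (0, 0)"
  using dist_vertex_origin[of k x] by auto

lemma vertex_eq_iff:
  assumes "0 < k" "int k = 2 * h"
  shows "vertex k x = vertex k y \<longleftrightarrow> (y - x) mod (2 * int k) = 0"
proof
  assume eq: "vertex k x = vertex k y"
  show "(y - x) mod (2 * int k) = 0"
  proof (rule ccontr)
    assume "(y - x) mod (2 * int k) \<noteq> 0"
    then obtain m where "proj k m x * proj k m y < 0" using proj_opposite_signs[OF assms] by blast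
    moreover have "proj k m x = proj k m y" using eq inner_vertex_dir[OF assms(1)] by metis
    ultimately show False by (simp add: mult_less_0_iff)
  qed
next
  assume "(y - x) mod (2 * int k) = 0"
  then have "x mod (2 * int k) = y mod (2 * int k)"
    by (metis dvd_eq_mod_eq_0 dvd_minus_iff minus_diff_eq mod_eq_dvd_iff)
  then show "vertex k x = vertex k y" unfolding vertex_def by simp
qed

lemma vertex_inj:
  assumes "0 < k" "int k = 2 * h" "vertex k x = vertex k y" "\<bar>x - y\<bar> < 2 * int k"
  shows "x = y"
proof (rule ccontr)
  assume "x \<noteq> y"
  moreover have "2 * int k dvd y - x" using vertex_eq_iff[OF assms(1,2)] assms(3) by (simp add: dvd_eq_mod_eq_0)
  ultimately have "\<bar>2 * int k\<bar> \<le> \<bar>y - x\<bar>" by (intro dvd_imp_le_int) auto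
  then show False using assms(4) by simp
qed

lemma polyv_eq_vertex: "i < 2 * k \<Longrightarrow> polyv k i = vertex k (int i)"
  unfolding vertex_def by simp

lemma vertex_in_Sk: "0 < k \<Longrightarrow> vertex k x \<in> Sk k"
  unfolding Sk_def vertex_def by (intro insertI2 imageI) (simp add: nat_less_iff)

lemma Sk_cases:
  assumes "v \<in> Sk k"
  obtains "v = (0, 0)" | x where "v = vertex k x"
  using assms polyv_eq_vertex unfolding Sk_def by blast

lemma dirs_iff: "d \<in> dirs k \<longleftrightarrow> (\<exists>m. 0 \<le> m \<and> m < int k \<and> d = dir k m)"
proof
  assume "d \<in> dirs k"
  then obtain i where "i \<in> {1..k}" "d = dir k (int (i - 1))"
    unfolding dirs_def dir_def by auto
  then show "\<exists>m. 0 \<le> m \<and> m < int k \<and> d = dir k m" by (intro exI[of _ "int (i - 1)"]) auto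
next
  assume "\<exists>m. 0 \<le> m \<and> m < int k \<and> d = dir k m"
  then obtain m where m: "0 \<le> m" "m < int k" "d = dir k m" by blast
  then have "nat m + 1 \<in> {1..k}" "real (nat m + 1 - 1) = of_int m" by auto
  then show "d \<in> dirs k" unfolding dirs_def m(3) dir_def by force
qed

lemma dir_add_half_turn: "0 < k \<Longrightarrow> dir k (m + int k) = - dir k m"
proof -
  assume "0 < k"
  then have "of_int (m + int k) * pi / real k = of_int m * pi / real k + pi"
    by (simp add: field_simps)
  then show ?thesis unfolding dir_def by simp
qed

lemma dist_vertices:
  assumes "0 < k"
  shows "dist (vertex k x) (vertex k y) = sqrt (2 - 2 * cos (of_int (x - y) * pi / real k))"
proof -
  define a where "a = of_int (x mod (2 * int k)) * pi / real k + 2 * pi / (3 * real k)"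
  define b where "b = of_int (y mod (2 * int k)) * pi / real k + 2 * pi / (3 * real k)"
  define q where "q = y div (2 * int k) - x div (2 * int k)"
  have "dist (vertex k x) (vertex k y) = sqrt ((cos a - cos b)\<^sup>2 + (sin a - sin b)\<^sup>2)"
    unfolding vertex_eq_polar[OF assms] a_def[symmetric] b_def[symmetric] dist_Pair_Pair dist_real_def
    by simp
  also have "(cos a - cos b)\<^sup>2 + (sin a - sin b)\<^sup>2 = 2 - 2 * cos (a - b)"
    unfolding cos_diff power2_diff using sin_cos_squared_add[of a] sin_cos_squared_add[of b]
    by (simp add: algebra_simps)
  also have "a - b = of_int (x - y) * pi / real k + (2 * pi) * of_int q"
  proof -
    have "x mod (2 * int k) - y mod (2 * int k) = (x - y) + 2 * int k * q"
      unfolding q_def by (simp add: algebra_simps minus_div_mult_eq_mod[symmetric])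
    then have "of_int (x mod (2 * int k) - y mod (2 * int k)) = (of_int (x - y + 2 * int k * q) :: real)"
      by (rule arg_cong)
    then have "of_int (x mod (2 * int k)) - of_int (y mod (2 * int k)) = of_int (x - y) + 2 * real k * (of_int q :: real)"
      by simp
    moreover have "a - b = (of_int (x mod (2 * int k)) - of_int (y mod (2 * int k))) * pi / real k"
      unfolding a_def b_def by (simp add: diff_divide_distrib left_diff_distrib)
    ultimately have "a - b = (of_int (x - y) + 2 * real k * of_int q) * pi / real k" by simp
    also have "\<dots> = of_int (x - y) * pi / real k + (2 * pi) * of_int q"
      using assms by (simp add: field_simps)
    finally show ?thesis .
  qed
  finally show ?thesis by (simp add: cos_add)
qed

lemma chord_length:
  assumes "0 < k" "0 \<le> n" "n \<le> int k"
  shows "sqrt (2 - 2 * cos (of_int n * pi / real k)) = 2 * sin (of_int n * pi / (2 * real k))"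
proof -
  define w where "w = of_int n * pi / (2 * real k)"
  have "0 \<le> sin w"
  proof (rule sin_ge_zero)
    have "of_int n * pi \<le> real k * pi" using assms(3) pi_ge_zero by (intro mult_right_mono) linarith+
    then show "w \<le> pi" unfolding w_def using assms(1) by (simp add: divide_le_eq)
  qed (use assms(2) in \<open>simp add: w_def\<close>)
  moreover have "2 - 2 * cos (2 * w) = (2 * sin w)\<^sup>2"
    unfolding cos_double_sin by (simp add: power2_eq_square)
  ultimately have "sqrt (2 - 2 * cos (2 * w)) = 2 * sin w" by (simp only: real_sqrt_abs)
  moreover have "of_int n * pi / real k = 2 * w" unfolding w_def using assms(1) by (simp add: field_simps)
  ultimately show ?thesis unfolding w_def[symmetric] by simp
qed

lemma sin_plus_cos_gt_1:
  assumes "0 < x" "x < pi / 2"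
  shows "1 < sin x + cos x"
proof -
  have "0 < sin x" "0 < cos x" using assms by (auto intro: sin_gt_zero cos_gt_zero_pi)
  then have "1 < (sin x + cos x)\<^sup>2" using sin_cos_squared_add[of x] by (simp add: power2_sum)
  then show ?thesis using \<open>0 < sin x\<close> \<open>0 < cos x\<close> by (smt (verit) power_le_one)
qed

text \<open>Pairing \<open>n\<close> with \<open>k - n\<close> turns the sum of sines into half a sum of \<open>sin + cos\<close>.\<close>
lemma sum_chords_gt:
  assumes "2 \<le> k"
  shows "real k - 1 < (\<Sum>n\<in>{1..k-1}. 2 * sin (real n * pi / (2 * real k)))"
proof -
  define f where "f n = sin (real n * pi / (2 * real k))" for n :: nat
  define g where "g n = cos (real n * pi / (2 * real k))" for n :: nat
  have angle: "0 < real n * pi / (2 * real k)" "real n * pi / (2 * real k) < pi / 2" if "n \<in> {1..k-1}" for n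
    using that assms by (auto simp: field_simps)
  have fg: "f (k - n) = g n" if "n \<in> {1..k-1}" for n
  proof -
    have "n \<le> k" using that by auto
    then have "real (k - n) = real k - real n" by (simp add: of_nat_diff)
    then have "real (k - n) * pi / (2 * real k) = pi / 2 - real n * pi / (2 * real k)"
      using assms by (simp add: field_simps)
    then show ?thesis unfolding f_def g_def by (simp add: sin_cos_eq)
  qed
  have "sum f {1..k-1} = (\<Sum>n\<in>{1..k-1}. f (k - 1 + 1 - n))" by (rule sum.atLeastAtMost_rev)
  also have "\<dots> = sum g {1..k-1}" using fg assms by (intro sum.cong) auto
  finally have "sum f {1..k-1} = sum g {1..k-1}" .
  moreover have "(\<Sum>n\<in>{1..k-1}. 1) < (\<Sum>n\<in>{1..k-1}. f n + g n)"
    using assms sin_plus_cos_gt_1[OF angle] unfolding f_def g_def by (intro sum_strict_mono) auto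
  ultimately have "real (k - 1) < 2 * sum f {1..k-1}" by (simp add: sum.distrib)
  then show ?thesis unfolding f_def using assms by (simp add: sum_distrib_left of_nat_diff)
qed

lemma diameter_doubleton: "diameter {a, b :: 'a :: real_normed_vector} = dist a b"
proof (rule antisym)
  show "diameter {a, b} \<le> dist a b"
    by (rule diameter_le) (auto simp: dist_norm norm_minus_commute)
  show "dist a b \<le> diameter {a, b}"
    by (rule diameter_bounded_bound) (auto intro: finite_imp_bounded)
qed

lemma tree_length_psubset:
  assumes "is_graph S E" "finite E" "F \<subset> E"
  shows "tree_length F < tree_length E"
proof -
  obtain e where e: "e \<in> E" "e \<notin> F" using assms(3) by blast
  then obtain a b where "e = {a, b}" "a \<noteq> b" using assms(1) unfolding is_graph_def by blast
  then have "0 < diameter e" by (simp add: diameter_doubleton)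
  have nonneg: "0 \<le> diameter x" if "x \<in> E" for x
    using that assms(1) unfolding is_graph_def by (auto simp: diameter_doubleton)
  have "finite F" using assms(2,3) by (auto intro: finite_subset)
  then have "tree_length F < diameter e + tree_length F" using \<open>0 < diameter e\<close> by simp
  also have "\<dots> = (\<Sum>x\<in>insert e F. diameter x)"
    unfolding tree_length_def using \<open>finite F\<close> e(2) by simp
  also have "\<dots> \<le> tree_length E"
    unfolding tree_length_def using assms(3) e(1) nonneg by (intro sum_mono2[OF assms(2)]) auto
  finally show ?thesis .
qed

lemma polygon_eq: "0 < k \<Longrightarrow> Sk k - {(0, 0)} = polyv k ` {..<2 * k}"
  unfolding Sk_def using polyv_eq_vertex vertex_neq_origin by (metis Diff_insert_absorb imageE lessThan_iff)

lemma card_polygon: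
  assumes "0 < k" "even k"
  shows "card (Sk k - {(0, 0)}) = 2 * k"
proof -
  obtain h where h: "int k = 2 * h" using assms(2) by (metis evenE of_nat_mult of_nat_numeral)
  have "inj_on (polyv k) {..<2 * k}"
    by (rule inj_onI) (use vertex_inj[OF assms(1) h] polyv_eq_vertex in fastforce)
  then show ?thesis unfolding polygon_eq[OF assms(1)] by (simp add: card_image)
qed

section \<open>Paths and rooted graphs\<close>

lemma is_path_iff:
  "is_path S E ps u v \<longleftrightarrow> ps \<noteq> [] \<and> hd ps = u \<and> last ps = v \<and> distinct ps \<and> set ps \<subseteq> S
     \<and> successively (\<lambda>a b. {a, b} \<in> E) ps"
  by (simp add: is_path_def successively_conv_nth)

lemma is_path_rev: "is_path S E ps u v \<Longrightarrow> is_path S E (rev ps) v u"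
  unfolding is_path_iff by (simp add: hd_rev last_rev insert_commute)

lemma is_path_append:
  assumes "is_path S E ps u w" "is_path S E qs w v" "set ps \<inter> set qs = {w}"
  shows "is_path S E (ps @ tl qs) u v"
proof -
  obtain qs' where qs: "qs = w # qs'" using assms(2) unfolding is_path_iff by (cases qs) auto
  have "last ps = w" "ps \<noteq> []" using assms(1) unfolding is_path_iff by auto
  moreover have "last (ps @ qs') = v" using assms(2) \<open>last ps = w\<close> unfolding qs is_path_iff by auto
  moreover have "set ps \<inter> set qs' = {}" using assms(2,3) unfolding qs is_path_iff by auto
  ultimately show ?thesis using assms unfolding qs is_path_iff
    by (auto simp: successively_append_iff successively_Cons)
qed

text \<open>The parent of a vertex is some neighbour one step closer to the root.\<close>
locale rooted_graph =
  fixes S :: "pt set" and E :: "pt set set" and root :: pt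
  assumes root_in: "root \<in> S"
    and reaches_root: "\<And>v. v \<in> S \<Longrightarrow> \<exists>ps. is_path S E ps v root"
begin

definition walk_to_root :: "nat \<Rightarrow> pt \<Rightarrow> bool" where
  "walk_to_root n v \<longleftrightarrow> (\<exists>ps. length ps = Suc n \<and> hd ps = v \<and> last ps = root \<and> set ps \<subseteq> S
     \<and> successively (\<lambda>a b. {a, b} \<in> E) ps)"

definition depth :: "pt \<Rightarrow> nat" where
  "depth v = (LEAST n. walk_to_root n v)"

definition parent :: "pt \<Rightarrow> pt" where
  "parent v = (SOME w. w \<in> S \<and> {v, w} \<in> E \<and> Suc (depth w) = depth v)"

definition root_path :: "pt \<Rightarrow> pt list" where
  "root_path v = map (\<lambda>i. (parent ^^ i) v) [0..<Suc (depth v)]"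

definition branch_root :: "pt \<Rightarrow> pt" where
  "branch_root v = (parent ^^ (depth v - 1)) v"

lemma walk_to_root_depth:
  assumes "v \<in> S"
  shows "walk_to_root (depth v) v"
proof -
  obtain ps where "is_path S E ps v root" using reaches_root[OF assms] by blast
  then have "walk_to_root (length ps - 1) v" unfolding walk_to_root_def is_path_iff by (intro exI[of _ ps]) auto
  then show ?thesis unfolding depth_def by (rule LeastI)
qed

lemma depth_le: "walk_to_root n v \<Longrightarrow> depth v \<le> n"
  unfolding depth_def by (rule Least_le)

lemma depth_eq_0_iff:
  assumes "v \<in> S"
  shows "depth v = 0 \<longleftrightarrow> v = root"
proof
  assume "depth v = 0"
  then obtain ps where "length ps = 1" "hd ps = v" "last ps = root"
    using walk_to_root_depth[OF assms] unfolding walk_to_root_def by auto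
  then show "v = root" by (cases ps) auto
next
  assume "v = root"
  then have "walk_to_root 0 v" unfolding walk_to_root_def using root_in by (intro exI[of _ "[v]"]) auto
  then show "depth v = 0" using depth_le by fastforce
qed

lemma parent_exists:
  assumes "v \<in> S" "v \<noteq> root"
  shows "\<exists>w. w \<in> S \<and> {v, w} \<in> E \<and> Suc (depth w) = depth v"
proof -
  obtain ps where ps: "length ps = Suc (depth v)" "hd ps = v" "last ps = root" "set ps \<subseteq> S"
    "successively (\<lambda>a b. {a, b} \<in> E) ps" using walk_to_root_depth[OF assms(1)] unfolding walk_to_root_def by auto
  have "depth v \<noteq> 0" using depth_eq_0_iff[OF assms(1)] assms(2) by simp
  then obtain w ps' where ps_eq: "ps = v # w # ps'" using ps(1,2) by (cases ps; cases "tl ps") auto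
  have w: "w \<in> S" and e: "{v, w} \<in> E" using ps(4,5) ps_eq by auto
  have "walk_to_root (depth v - 1) w" unfolding walk_to_root_def using ps ps_eq by (intro exI[of _ "w # ps'"]) auto
  then have "depth w \<le> depth v - 1" by (rule depth_le)
  moreover obtain qs where qs: "length qs = Suc (depth w)" "hd qs = w" "last qs = root" "set qs \<subseteq> S"
    "successively (\<lambda>a b. {a, b} \<in> E) qs" using walk_to_root_depth[OF w] unfolding walk_to_root_def by auto
  then have "walk_to_root (Suc (depth w)) v" unfolding walk_to_root_def using assms(1) e
    by (intro exI[of _ "v # qs"]) (auto simp: successively_Cons)
  then have "depth v \<le> Suc (depth w)" by (rule depth_le)
  ultimately show ?thesis using \<open>depth v \<noteq> 0\<close> w e by (intro exI[of _ w]) auto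
qed

lemma
  assumes "v \<in> S" "v \<noteq> root"
  shows parent_in: "parent v \<in> S" and parent_edge: "{v, parent v} \<in> E"
    and depth_parent: "Suc (depth (parent v)) = depth v"
  using someI_ex[OF parent_exists[OF assms]] unfolding parent_def by auto

lemma iterate_parent:
  assumes "v \<in> S" "i \<le> depth v"
  shows "(parent ^^ i) v \<in> S \<and> depth ((parent ^^ i) v) = depth v - i"
  using assms(2)
proof (induction i)
  case (Suc i)
  then have "(parent ^^ i) v \<in> S" "depth ((parent ^^ i) v) \<noteq> 0" by simp_all
  then have "(parent ^^ i) v \<noteq> root" using depth_eq_0_iff[of "(parent ^^ i) v"] by simp
  then show ?case using Suc parent_in[of "(parent ^^ i) v"] depth_parent[of "(parent ^^ i) v"] by auto
qed (use assms(1) in auto)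

lemma iterate_parent_not_root:
  assumes "v \<in> S" "i < depth v"
  shows "(parent ^^ i) v \<noteq> root"
  using iterate_parent[OF assms(1), of i] depth_eq_0_iff[of "(parent ^^ i) v"] assms(2) by simp

lemma iterate_parent_depth: "v \<in> S \<Longrightarrow> (parent ^^ depth v) v = root"
  using iterate_parent[of v "depth v"] depth_eq_0_iff[of "(parent ^^ depth v) v"] by simp

lemma root_path_nth: "i \<le> depth v \<Longrightarrow> root_path v ! i = (parent ^^ i) v"
  unfolding root_path_def by (simp del: upt_Suc)

lemma length_root_path [simp]: "length (root_path v) = Suc (depth v)"
  unfolding root_path_def by simp

lemma root_path_is_path:
  assumes "v \<in> S"
  shows "is_path S E (root_path v) v root"
  unfolding is_path_def
proof (intro conjI allI impI)
  show "root_path v \<noteq> []" "hd (root_path v) = v" unfolding root_path_def by (simp_all add: hd_map del: upt_Suc)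
  show "last (root_path v) = root"
    using last_conv_nth[of "root_path v"] root_path_nth[of "depth v" v] iterate_parent_depth[OF assms]
    by (simp add: root_path_def del: upt_Suc)
  show "set (root_path v) \<subseteq> S" using iterate_parent[OF assms] unfolding root_path_def by auto
  show "distinct (root_path v)"
    unfolding root_path_def distinct_map
    by (auto simp: inj_on_def iterate_parent[OF assms] simp del: upt_Suc dest: arg_cong[of _ _ depth])
  fix i
  assume "Suc i < length (root_path v)"
  then have "i < depth v" by simp
  then show "{root_path v ! i, root_path v ! Suc i} \<in> E"
    using parent_edge[of "(parent ^^ i) v"] iterate_parent[OF assms, of i] iterate_parent_not_root[OF assms]
    by (simp add: root_path_nth)
qed

lemma root_path_0: "root_path v ! 0 = v"
  by (simp add: root_path_nth)

lemma root_path_depth: "v \<in> S \<Longrightarrow> root_path v ! depth v = root"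
  by (simp add: root_path_nth iterate_parent_depth)

lemma root_path_Suc: "Suc i \<le> depth v \<Longrightarrow> root_path v ! Suc i = parent (root_path v ! i)"
  by (simp add: root_path_nth)

lemma root_path_nth_in:
  assumes "v \<in> S" "i < depth v"
  shows "root_path v ! i \<in> S" "root_path v ! i \<noteq> root"
  using iterate_parent[OF assms(1), of i] iterate_parent_not_root[OF assms] assms(2)
  by (simp_all add: root_path_nth)

lemma in_root_path_conv_nth:
  assumes "v \<in> S" "z \<in> set (root_path v)" "z \<noteq> root"
  obtains i where "i < depth v" "root_path v ! i = z"
proof -
  obtain i where i: "i < Suc (depth v)" "root_path v ! i = z"
    using assms(2) by (auto simp: in_set_conv_nth)
  moreover have "i \<noteq> depth v" using i assms(3) root_path_depth[OF assms(1)] by auto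
  ultimately show thesis by (intro that[of i]) auto
qed

lemma branch_root_iterate:
  assumes "v \<in> S" "i < depth v"
  shows "branch_root ((parent ^^ i) v) = branch_root v"
proof -
  have "depth ((parent ^^ i) v) - 1 + i = depth v - 1"
    using iterate_parent[OF assms(1), of i] assms(2) by simp
  then show ?thesis unfolding branch_root_def by (metis funpow_add comp_apply)
qed

lemma branch_root_root_path:
  assumes "v \<in> S" "z \<in> set (root_path v)" "z \<noteq> root"
  shows "branch_root z = branch_root v"
proof -
  obtain i where "i < depth v" "root_path v ! i = z" by (rule in_root_path_conv_nth[OF assms])
  then show ?thesis using branch_root_iterate[OF assms(1), of i] by (simp add: root_path_nth)
qed

lemma root_path_branch_root: "root_path v ! (depth v - 1) = branch_root v"
  unfolding branch_root_def by (simp add: root_path_nth)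

lemma
  assumes "v \<in> S" "v \<noteq> root"
  shows branch_root_in_root_path: "branch_root v \<in> set (root_path v)"
    and branch_root_in: "branch_root v \<in> S" and branch_root_neq_root: "branch_root v \<noteq> root"
    and parent_branch_root: "parent (branch_root v) = root"
proof -
  have d: "0 < depth v" using depth_eq_0_iff[OF assms(1)] assms(2) by simp
  have "depth v - 1 < length (root_path v)" by simp
  from nth_mem[OF this] show "branch_root v \<in> set (root_path v)" unfolding root_path_branch_root .
  show "branch_root v \<in> S" "branch_root v \<noteq> root"
    using root_path_nth_in[OF assms(1), of "depth v - 1"] d root_path_branch_root[of v] by simp_all
  have "(parent ^^ Suc (depth v - 1)) v = root" using iterate_parent_depth[OF assms(1)] d by simp
  then show "parent (branch_root v) = root" unfolding branch_root_def by simp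
qed

lemma branch_root_of_child:
  assumes "v \<in> S" "v \<noteq> root" "parent v = root"
  shows "branch_root v = v"
proof -
  have "depth v = 1" using depth_parent[OF assms(1,2)] assms(3) depth_eq_0_iff[OF root_in] by simp
  then show ?thesis unfolding branch_root_def by simp
qed

lemma root_paths_disjoint:
  assumes "x \<in> S" "w \<in> S" "branch_root x \<noteq> branch_root w"
  shows "set (root_path x) \<inter> set (root_path w) = {root}"
proof -
  have "root \<in> set (root_path x)" "root \<in> set (root_path w)"
    using root_path_is_path[OF assms(1)] root_path_is_path[OF assms(2)] unfolding is_path_iff
    by (metis last_in_set)+
  moreover have "z = root" if "z \<in> set (root_path x)" "z \<in> set (root_path w)" for z
    using branch_root_root_path[OF assms(1) that(1)] branch_root_root_path[OF assms(2) that(2)] assms(3)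
    by auto
  ultimately show ?thesis by blast
qed

lemma sorted_root_path:
  assumes "sorted_wrt (<) (map f (root_path v))" "v \<in> S" "v \<noteq> branch_root v"
  shows "f v < f (branch_root v)" "f (branch_root v) < f root"
proof -
  have d: "1 < depth v"
  proof (rule ccontr)
    assume "\<not> 1 < depth v"
    then have "depth v - 1 = 0" by simp
    then show False using assms(3) unfolding branch_root_def by simp
  qed
  show "f v < f (branch_root v)"
    using sorted_wrt_nth_less[OF assms(1), of 0 "depth v - 1"] d root_path_0[of v] root_path_branch_root[of v]
    by simp
  show "f (branch_root v) < f root"
    using sorted_wrt_nth_less[OF assms(1), of "depth v - 1" "depth v"] d root_path_branch_root[of v]
      root_path_depth[OF assms(2)] by simp
qed

end

section \<open>The star\<close>

lemma star_eq: "0 < k \<Longrightarrow> star k = (\<lambda>v. {(0, 0), v}) ` (Sk k - {(0, 0)})"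
  unfolding star_def polygon_eq by blast

lemma star_edge_origin:
  assumes "0 < k" "{a, b} \<in> star k"
  shows "a = (0, 0) \<or> b = (0, 0)"
proof -
  obtain v where "{a, b} = {(0, 0), v}" using assms unfolding star_eq[OF assms(1)] by blast
  then show ?thesis by (metis doubleton_eq_iff)
qed

lemma inj_on_star_edge: "inj_on (\<lambda>v. {(0, 0), v}) (Sk k - {(0, 0)})"
  by (rule inj_onI) (metis DiffD2 doubleton_eq_iff singletonI)

lemma tree_length_star:
  assumes "0 < k" "even k"
  shows "tree_length (star k) = 2 * k"
proof -
  have "diameter {(0, 0), v} = 1" if "v \<in> Sk k - {(0, 0)}" for v
    using that dist_vertex_origin[OF assms(1)] unfolding diameter_doubleton
    by (metis DiffE Sk_cases dist_commute singletonI)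
  then show ?thesis unfolding tree_length_def star_eq[OF assms(1)]
    by (simp add: sum.reindex[OF inj_on_star_edge] card_polygon[OF assms])
qed

lemma degree_star:
  assumes "0 < k" "even k"
  shows "degree (star k) (0, 0) = 2 * k"
proof -
  have "{e \<in> star k. (0, 0) \<in> e} = star k" unfolding star_eq[OF assms(1)] by blast
  then show ?thesis
    unfolding degree_def using star_eq[OF assms(1)] card_image[OF inj_on_star_edge] card_polygon[OF assms]
    by simp
qed

lemma star_path_cases:
  assumes "0 < k" "is_path (Sk k) (star k) ps u v"
  shows "ps = [u] \<and> u = v \<or> ps = [u, v] \<and> u \<noteq> v \<and> (u = (0, 0) \<or> v = (0, 0))
    \<or> ps = [u, (0, 0), v] \<and> u \<noteq> (0, 0) \<and> v \<noteq> (0, 0) \<and> u \<noteq> v"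
proof -
  have "ps \<noteq> []" "hd ps = u" "last ps = v" "distinct ps"
    and edges: "successively (\<lambda>a b. {a, b} \<in> star k) ps" using assms(2) unfolding is_path_iff by auto
  then obtain a r where ps: "ps = a # r" by (cases ps) auto
  show ?thesis
  proof (cases r)
    case Nil
    then show ?thesis using ps \<open>hd ps = u\<close> \<open>last ps = v\<close> by simp
  next
    case (Cons b r2)
    have ab: "a = (0, 0) \<or> b = (0, 0)" using edges star_edge_origin[OF assms(1), of a b] unfolding ps Cons by simp
    show ?thesis
    proof (cases r2)
      case Nil
      then show ?thesis using ps Cons ab \<open>hd ps = u\<close> \<open>last ps = v\<close> \<open>distinct ps\<close> by auto
    next
      case (Cons c r3)
      have bc: "b = (0, 0) \<or> c = (0, 0)"
        using edges star_edge_origin[OF assms(1), of b c] unfolding ps \<open>r = b # r2\<close> Cons by simp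
      have "a \<noteq> b" "a \<noteq> c" "b \<noteq> c" using \<open>distinct ps\<close> unfolding ps \<open>r = b # r2\<close> Cons by auto
      then have b: "b = (0, 0)" using ab bc by auto
      show ?thesis
      proof (cases r3)
        case Nil
        then show ?thesis
          using ps \<open>r = b # r2\<close> Cons b \<open>a \<noteq> b\<close> \<open>a \<noteq> c\<close> \<open>b \<noteq> c\<close> \<open>hd ps = u\<close> \<open>last ps = v\<close> by simp
      next
        case (Cons d r4)
        have "c = (0, 0) \<or> d = (0, 0)"
          using edges star_edge_origin[OF assms(1), of c d] unfolding ps \<open>r = b # r2\<close> \<open>r2 = c # r3\<close> Cons by simp
        moreover have "b \<noteq> d" using \<open>distinct ps\<close> unfolding ps \<open>r = b # r2\<close> \<open>r2 = c # r3\<close> Cons by auto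
        ultimately show ?thesis using b \<open>b \<noteq> c\<close> by simp
      qed
    qed
  qed
qed

lemma star_edge:
  assumes "0 < k" "w \<in> Sk k" "w \<noteq> (0, 0)"
  shows "{(0, 0), w} \<in> star k" "{w, (0, 0)} \<in> star k"
  unfolding star_eq[OF assms(1)] using assms(2,3) by (auto simp: insert_commute)

lemma star_connected:
  assumes "0 < k" "u \<in> Sk k" "v \<in> Sk k"
  shows "\<exists>ps. is_path (Sk k) (star k) ps u v"
proof -
  have o: "(0, 0) \<in> Sk k" unfolding Sk_def by simp
  consider "u = v" | "u \<noteq> v" "u = (0, 0)" | "u \<noteq> v" "v = (0, 0)" | "u \<noteq> v" "u \<noteq> (0, 0)" "v \<noteq> (0, 0)"
    by blast
  then show ?thesis
  proof cases
    case 1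
    then show ?thesis using assms(2) by (intro exI[of _ "[u]"]) (simp add: is_path_iff)
  next
    case 2
    then show ?thesis using assms star_edge(1)[OF assms(1,3)] by (intro exI[of _ "[u, v]"]) (simp add: is_path_iff)
  next
    case 3
    then show ?thesis using assms star_edge(2)[OF assms(1,2)] by (intro exI[of _ "[u, v]"]) (simp add: is_path_iff)
  next
    case 4
    then show ?thesis using assms o star_edge(2)[OF assms(1,2)] star_edge(1)[OF assms(1,3)]
      by (intro exI[of _ "[u, (0, 0), v]"]) (simp add: is_path_iff)
  qed
qed

lemma star_no_cycle:
  assumes "0 < k"
  shows "\<not> is_cycle (Sk k) (star k) cs"
proof
  assume "is_cycle (Sk k) (star k) cs"
  then have cs: "3 \<le> length cs" "distinct cs"
    "\<And>i. Suc i < length cs \<Longrightarrow> {cs ! i, cs ! Suc i} \<in> star k" "{last cs, hd cs} \<in> star k"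
    unfolding is_cycle_def by auto
  have ne: "cs ! i \<noteq> cs ! j" if "i < length cs" "j < length cs" "i \<noteq> j" for i j
    using cs(2) that by (simp add: nth_eq_iff_index_eq)
  have "cs ! 0 = (0, 0) \<or> cs ! 1 = (0, 0)" "cs ! 1 = (0, 0) \<or> cs ! 2 = (0, 0)"
    using star_edge_origin[OF assms cs(3)[of 0]] star_edge_origin[OF assms cs(3)[of 1]] cs(1)
    by (simp_all add: numeral_2_eq_2)
  then have one: "cs ! 1 = (0, 0)" using ne[of 0 2] cs(1) by fastforce
  show False
  proof (cases "length cs = 3")
    case True
    have "cs \<noteq> []" using cs(1) by auto
    then have "last cs = cs ! 2" "hd cs = cs ! 0" using True by (simp_all add: last_conv_nth hd_conv_nth)
    then show False
      using star_edge_origin[OF assms cs(4)] one ne[of 1 2] ne[of 1 0] True by fastforce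
  next
    case False
    then have "cs ! 2 = (0, 0) \<or> cs ! 3 = (0, 0)"
      using star_edge_origin[OF assms cs(3)[of 2]] cs(1) by (simp add: numeral_3_eq_3 numeral_2_eq_2)
    then show False using one ne[of 1 2] ne[of 1 3] cs(1) False by fastforce
  qed
qed

lemma star_spanning_tree:
  assumes "0 < k"
  shows "spanning_tree (Sk k) (star k)"
proof -
  have "(0, 0) \<in> Sk k" unfolding Sk_def by simp
  then have "is_graph (Sk k) (star k)" unfolding is_graph_def star_eq[OF assms] by blast
  then show ?thesis unfolding spanning_tree_def using star_connected[OF assms] star_no_cycle[OF assms] by blast
qed

lemma monotone_path_pair: "inner u d \<noteq> inner v d \<Longrightarrow> monotone_path d [u, v]"
  unfolding monotone_path_def by (simp add: neq_iff)

lemma monotone_path_through_origin: "inner u d * inner v d < 0 \<Longrightarrow> monotone_path d [u, (0, 0), v]"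
  unfolding monotone_path_def by (auto simp: inner_origin mult_less_0_iff)

lemma star_paths_monotone_through_origin:
  assumes "0 < k" "int k = 2 * h" "u \<in> Sk k" "v \<in> Sk k" "u = (0, 0) \<or> v = (0, 0) \<or> u = v"
    and "is_path (Sk k) (star k) ps u v"
  shows "monotone_path (dir k 0) ps"
proof -
  have nonzero: "inner w (dir k 0) \<noteq> 0" if "w \<in> Sk k" "w \<noteq> (0, 0)" for w
    using that proj_nonzero[OF assms(1,2)] inner_vertex_dir[OF assms(1)] by (auto elim: Sk_cases)
  consider "ps = [u]" | "ps = [u, v]" "u \<noteq> v" "u = (0, 0) \<or> v = (0, 0)"
    using star_path_cases[OF assms(1,6)] assms(5) by blast
  then show ?thesis
  proof cases
    case 1
    then show ?thesis unfolding monotone_path_def by simp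
  next
    case 2
    then have "inner u (dir k 0) \<noteq> inner v (dir k 0)"
      using nonzero[OF assms(3)] nonzero[OF assms(4)] inner_origin[of "dir k 0"] by metis
    then show ?thesis unfolding 2(1) by (rule monotone_path_pair)
  qed
qed

lemma star_Dmonotone:
  assumes "0 < k" "int k = 2 * h"
  shows "Dmonotone (dirs k) (Sk k) (star k)"
  unfolding Dmonotone_def
proof (intro ballI)
  fix u v assume u: "u \<in> Sk k" and v: "v \<in> Sk k"
  show "\<exists>d\<in>dirs k. \<forall>ps. is_path (Sk k) (star k) ps u v \<longrightarrow> monotone_path d ps"
  proof (cases "u \<noteq> (0, 0) \<and> v \<noteq> (0, 0) \<and> u \<noteq> v")
    case True
    obtain x y where xy: "u = vertex k x" "v = vertex k y" using u v True by (auto elim!: Sk_cases)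
    then have "(y - x) mod (2 * int k) \<noteq> 0" using True vertex_eq_iff[OF assms] by auto
    then obtain m where m: "0 \<le> m" "m < int k" "proj k m x * proj k m y < 0"
      using proj_opposite_signs[OF assms] by blast
    then have "inner u (dir k m) * inner v (dir k m) < 0" unfolding xy inner_vertex_dir[OF assms(1)] by simp
    then have "monotone_path (dir k m) [u, (0, 0), v]" by (rule monotone_path_through_origin)
    then have "monotone_path (dir k m) ps" if "is_path (Sk k) (star k) ps u v" for ps
      using star_path_cases[OF assms(1) that] True by auto
    moreover have "dir k m \<in> dirs k" unfolding dirs_iff using m by auto
    ultimately show ?thesis by blast
  next
    case False
    then have "u = (0, 0) \<or> v = (0, 0) \<or> u = v" by blast
    moreover have "dir k 0 \<in> dirs k" unfolding dirs_iff using assms(1) by auto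
    ultimately show ?thesis using star_paths_monotone_through_origin[OF assms u v] by blast
  qed
qed

section \<open>Monotone graphs on \<open>S\<^sub>k\<close>\<close>

locale monotone_graph =
  fixes k :: nat and E :: "pt set set"
  assumes even_k: "even k" and two_le_k: "2 \<le> k"
    and graph: "is_graph (Sk k) E"
    and connected: "\<And>v. v \<in> Sk k \<Longrightarrow> \<exists>ps. is_path (Sk k) E ps v (0, 0)"
    and monotone: "Dmonotone (dirs k) (Sk k) E"
begin

sublocale rooted_graph "Sk k" E "(0, 0)"
  by unfold_locales (simp_all add: connected, simp add: Sk_def)

definition h :: int where "h = int k div 2"

lemma k_eq_2h: "int k = 2 * h"
  using even_k unfolding h_def by auto

lemma k_pos: "0 < k"
  using two_le_k by simp

lemma one_le_h: "1 \<le> h"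
  using k_eq_2h two_le_k by simp

lemma path_increasing:
  assumes "is_path (Sk k) E ps u v"
  obtains m where "sorted_wrt (<) (map (\<lambda>p. inner p (dir k m)) ps)"
proof -
  have "u \<in> Sk k" "v \<in> Sk k" using assms unfolding is_path_iff by (auto dest: hd_in_set last_in_set)
  then obtain d where "d \<in> dirs k" "monotone_path d ps"
    using monotone assms unfolding Dmonotone_def by blast
  then obtain m where d: "d = dir k m" and "monotone_path (dir k m) ps" unfolding dirs_iff by blast
  then consider "sorted_wrt (<) (map (\<lambda>p. inner p (dir k m)) ps)"
    | "sorted_wrt (<) (map (\<lambda>p. inner p (dir k (m + int k))) ps)"
    unfolding monotone_path_def by (auto simp: sorted_wrt_map dir_add_half_turn[OF k_pos] inner_minus_right)
  then show thesis using that by cases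
qed

lemma cross_branch_increasing:
  assumes "x \<in> Sk k" "w \<in> Sk k" "w \<noteq> (0, 0)" "branch_root x \<noteq> branch_root w"
  obtains m where "sorted_wrt (<) (map (\<lambda>p. inner p (dir k m)) (root_path x))" "0 < inner w (dir k m)"
proof -
  have "is_path (Sk k) E (root_path x @ tl (rev (root_path w))) x w"
    using root_path_is_path[OF assms(1)] is_path_rev[OF root_path_is_path[OF assms(2)]]
      root_paths_disjoint[OF assms(1,2,4)]
    by (intro is_path_append) auto
  then obtain m where m: "sorted_wrt (<) (map (\<lambda>p. inner p (dir k m)) (root_path x @ tl (rev (root_path w))))"
    by (rule path_increasing)
  have "(0, 0) \<in> set (root_path x)"
    using root_path_depth[OF assms(1)] nth_mem[of "depth x" "root_path x"] by simp
  moreover have "w \<in> set (tl (rev (root_path w)))"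
  proof -
    have "rev (root_path w) \<noteq> []" "last (rev (root_path w)) = w" "hd (rev (root_path w)) = (0, 0)"
      using root_path_is_path[OF assms(2)] unfolding is_path_iff by (simp_all add: last_rev hd_rev)
    then show ?thesis using assms(3) by (cases "rev (root_path w)") auto
  qed
  ultimately show thesis
    using m by (intro that) (auto simp: sorted_wrt_append inner_origin)
qed

lemma edge_parent: "v \<in> Sk k \<Longrightarrow> v \<noteq> (0, 0) \<Longrightarrow> {v, parent v} \<in> E \<and> {parent v, v} \<in> E"
  using parent_edge[of v] by (simp add: insert_commute)

lemma finite_E: "finite E"
proof -
  have "E \<subseteq> Pow (Sk k)" using graph unfolding is_graph_def by auto
  then show ?thesis by (rule finite_subset) (simp add: Sk_def)
qed

lemma parent_edges_length: "(\<Sum>v\<in>Sk k - {(0, 0)}. dist v (parent v)) \<le> tree_length E"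
proof -
  have inj: "inj_on (\<lambda>v. {v, parent v}) (Sk k - {(0, 0)})"
  proof (rule inj_onI)
    fix v w assume "v \<in> Sk k - {(0, 0)}" "w \<in> Sk k - {(0, 0)}" "{v, parent v} = {w, parent w}"
    then show "v = w" using depth_parent[of v] depth_parent[of w] by (auto simp: doubleton_eq_iff)
  qed
  have "(\<Sum>v\<in>Sk k - {(0, 0)}. dist v (parent v)) = (\<Sum>e\<in>(\<lambda>v. {v, parent v}) ` (Sk k - {(0, 0)}). diameter e)"
    by (simp add: sum.reindex[OF inj] diameter_doubleton)
  also have "\<dots> \<le> (\<Sum>e\<in>E. diameter e)"
    using parent_edge finite_E graph unfolding is_graph_def
    by (intro sum_mono2) (auto simp: diameter_doubleton)
  finally show ?thesis unfolding tree_length_def .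
qed

end

section \<open>Branches\<close>

locale branch = monotone_graph +
  fixes c :: int
  assumes parent_c: "parent (vertex k c) = (0, 0)"
begin

definition component :: "pt set" where
  "component = {v \<in> Sk k. v \<noteq> (0, 0) \<and> branch_root v = vertex k c}"

lemma vertex_c_in_component: "vertex k c \<in> component"
  unfolding component_def using branch_root_of_child[OF vertex_in_Sk[OF k_pos] vertex_neq_origin[OF k_pos] parent_c]
  by (simp add: vertex_in_Sk[OF k_pos] vertex_neq_origin[OF k_pos])

lemma vertex_neq_c: "1 \<le> j \<Longrightarrow> j < 2 * int k \<Longrightarrow> vertex k (c + j) \<noteq> vertex k c \<and> vertex k (c - j) \<noteq> vertex k c"
  unfolding vertex_eq_iff[OF k_pos k_eq_2h] by (simp add: zmod_zminus1_eq_if)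

lemma increasing_to_root:
  assumes "vertex k x \<in> component" "vertex k x \<noteq> vertex k c"
  obtains m where "proj k m x < proj k m c" "proj k m c < 0"
proof -
  obtain m where "sorted_wrt (<) (map (\<lambda>p. inner p (dir k m)) (root_path (vertex k x)))"
    using path_increasing[OF root_path_is_path[OF vertex_in_Sk[OF k_pos]]] .
  from sorted_root_path[OF this vertex_in_Sk[OF k_pos]] assms show thesis
    unfolding component_def by (intro that) (simp_all add: inner_vertex_dir[OF k_pos] inner_origin)
qed

lemma increasing_across:
  assumes "vertex k x \<in> component" "vertex k x \<noteq> vertex k c" "vertex k z \<notin> component"
  obtains m where "proj k m x < proj k m c" "proj k m c < 0" "0 < proj k m z"
    "sorted_wrt (<) (map (\<lambda>p. inner p (dir k m)) (root_path (vertex k x)))"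
proof -
  have "branch_root (vertex k x) \<noteq> branch_root (vertex k z)"
    using assms(1,3) unfolding component_def by (auto simp: vertex_in_Sk[OF k_pos] vertex_neq_origin[OF k_pos])
  then obtain m where m: "sorted_wrt (<) (map (\<lambda>p. inner p (dir k m)) (root_path (vertex k x)))"
    "0 < inner (vertex k z) (dir k m)"
    using cross_branch_increasing[OF vertex_in_Sk[OF k_pos] vertex_in_Sk[OF k_pos] vertex_neq_origin[OF k_pos]] by blast
  from sorted_root_path[OF m(1) vertex_in_Sk[OF k_pos]] m assms show thesis
    unfolding component_def by (intro that) (simp_all add: inner_vertex_dir[OF k_pos] inner_origin)
qed

lemma ccw_not_in_component:
  assumes "1 \<le> j" "j \<le> int k"
  shows "vertex k (c + j) \<notin> component"
proof
  assume "vertex k (c + j) \<in> component"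
  define P where "P = {j. 1 \<le> j \<and> j \<le> int k \<and> vertex k (c + j) \<in> component}"
  have "finite P" unfolding P_def by (rule finite_subset[of _ "{1..int k}"]) auto
  moreover have "j \<in> P" unfolding P_def using assms \<open>vertex k (c + j) \<in> component\<close> by simp
  ultimately obtain J where J: "1 \<le> J" "J \<le> int k" "vertex k (c + J) \<in> component"
    and max: "\<And>i. i \<in> P \<Longrightarrow> i \<le> J"
    unfolding P_def by (metis (mono_tags, lifting) Max_ge Max_in empty_iff mem_Collect_eq)
  have ne: "vertex k (c + J) \<noteq> vertex k c" using vertex_neq_c[of J] J k_pos by simp
  show False
  proof (cases "int k - 1 \<le> J")
    case True
    obtain m where "proj k m (c + J) < proj k m c" "proj k m c < 0"
      using increasing_to_root[OF J(3) ne] .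
    then show False using no_increasing_antipodal_to_root[OF k_pos k_eq_2h True J(2)] by simp
  next
    case False
    then have "J + 1 \<notin> P" using max by fastforce
    then have "vertex k (c + J + 1) \<notin> component" unfolding P_def using J False by (simp add: add.assoc)
    then obtain m where "proj k m (c + J) < proj k m c" "proj k m c < 0" "0 < proj k m (c + J + 1)"
      using increasing_across[OF J(3) ne] by blast
    then show False using no_increasing_ccw_crossing[OF k_pos k_eq_2h J(1)] False by simp
  qed
qed

lemma component_cw:
  assumes "v \<in> component"
  obtains j where "0 \<le> j" "j \<le> int k - 1" "v = vertex k (c - j)"
proof -
  obtain x where x: "v = vertex k x"
    using assms unfolding component_def by (auto elim: Sk_cases)
  define g where "g = (x - c) mod (2 * int k)"
  have g: "0 \<le> g" "g < 2 * int k" unfolding g_def using k_pos by auto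
  have "c + g - x = 2 * int k * - ((x - c) div (2 * int k))"
    unfolding g_def by (simp add: minus_div_mult_eq_mod[symmetric] algebra_simps)
  then have v: "v = vertex k (c + g)" unfolding x vertex_eq_iff[OF k_pos k_eq_2h] by simp
  consider "g = 0" | "1 \<le> g \<and> g \<le> int k" | "int k + 1 \<le> g" using g by linarith
  then show thesis
  proof cases
    case 1
    then show thesis using v by (intro that[of 0]) (simp_all add: k_pos)
  next
    case 2
    then show thesis using ccw_not_in_component[of g] v assms by simp
  next
    case 3
    have "vertex k (c - (2 * int k - g)) = vertex k (c + g)" unfolding vertex_eq_iff[OF k_pos k_eq_2h] by simp
    then show thesis using 3 g v by (intro that[of "2 * int k - g"]) simp_all
  qed
qed

lemma cw_step:
  assumes "1 \<le> j" "j \<le> int k - 2" "vertex k (c - j) \<in> component"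
  shows "vertex k (c - j - 1) \<in> component"
proof (rule ccontr)
  assume "vertex k (c - j - 1) \<notin> component"
  moreover have "vertex k (c - j) \<noteq> vertex k c" using vertex_neq_c[of j] assms by simp
  ultimately obtain m where "proj k m (c - j) < proj k m c" "proj k m c < 0" "0 < proj k m (c - j - 1)"
    using increasing_across[OF assms(3)] by blast
  then show False using no_increasing_cw_crossing[OF k_pos k_eq_2h assms(1,2)] by simp
qed

lemma cw_far_in_component:
  assumes "component \<noteq> {vertex k c}"
  shows "vertex k (c - (int k - 1)) \<in> component"
proof -
  obtain v where "v \<in> component" "v \<noteq> vertex k c" using assms vertex_c_in_component by blast
  then obtain j0 where j0: "1 \<le> j0" "j0 \<le> int k - 1" "vertex k (c - j0) \<in> component"
    by (metis component_cw diff_zero order_le_less zero_less_iff_neq_zero int_one_le_iff_zero_less)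
  have "vertex k (c - (j0 + int n)) \<in> component" if "j0 + int n \<le> int k - 1" for n
    using that
  proof (induction n)
    case (Suc n)
    then show ?case using cw_step[of "j0 + int n"] j0 by (simp add: algebra_simps)
  qed (use j0 in simp)
  from this[of "nat (int k - 1 - j0)"] show ?thesis using j0 by simp
qed

lemma cw_in_component:
  assumes "component \<noteq> {vertex k c}" "0 \<le> j" "j \<le> int k - 1"
  shows "vertex k (c - j) \<in> component"
proof -
  consider "j = 0" | "j = int k - 1" | "1 \<le> j \<and> j \<le> int k - 2" using assms by linarith
  then show ?thesis
  proof cases
    case 3
    show ?thesis
    proof (rule ccontr)
      have far: "vertex k (c - (int k - 1)) \<in> component" using cw_far_in_component[OF assms(1)] .
      moreover have "vertex k (c - (int k - 1)) \<noteq> vertex k c" using vertex_neq_c[of "int k - 1"] two_le_k by simp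
      moreover assume "vertex k (c - j) \<notin> component"
      ultimately obtain m where "proj k m (c - (int k - 1)) < proj k m c" "proj k m c < 0" "0 < proj k m (c - j)"
        using increasing_across by blast
      then show False using no_increasing_far_cw_crossing[OF k_pos k_eq_2h, of j m c] 3 by simp
    qed
  qed (use vertex_c_in_component cw_far_in_component[OF assms(1)] in simp_all)
qed

end

section \<open>Long branches\<close>

locale long_branch = branch +
  assumes long: "component \<noteq> {vertex k c}"
begin

definition zig :: "nat \<Rightarrow> pt" where
  "zig q = vertex k (c - h - zigzag q)"

lemma inner_zig: "inner (zig q) (dir k m) = proj k m (c - h - zigzag q)"
  unfolding zig_def inner_vertex_dir[OF k_pos] ..

lemma zig_in_Sk: "zig q \<in> Sk k" and zig_neq_origin: "zig q \<noteq> (0, 0)"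
  unfolding zig_def using vertex_in_Sk[OF k_pos] vertex_neq_origin[OF k_pos] by auto

lemma zig_in_component: "1 \<le> q \<Longrightarrow> q \<le> k \<Longrightarrow> zig q \<in> component"
  unfolding zig_def using cw_in_component[OF long, of "h + zigzag q"] zigzag_bounds[of q k] k_eq_2h
  by (simp add: algebra_simps)

lemma zig_k: "zig k = vertex k c"
proof -
  have "int k = int (2 * nat h)" using k_eq_2h one_le_h by simp
  then have "k = 2 * nat h" by (simp only: of_nat_eq_iff)
  then show ?thesis unfolding zig_def using zigzag_double[of "nat h"] one_le_h by simp
qed

lemma zig_inj:
  assumes "1 \<le> a" "a \<le> k" "1 \<le> b" "b \<le> k" "zig a = zig b"
  shows "a = b"
proof -
  have "- int k \<le> 2 * zigzag a" "2 * zigzag a \<le> int k - 1" "- int k \<le> 2 * zigzag b" "2 * zigzag b \<le> int k - 1"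
    using zigzag_bounds[OF assms(1,2)] zigzag_bounds[OF assms(3,4)] by auto
  then have "c - h - zigzag a = c - h - zigzag b"
    using vertex_inj[OF k_pos k_eq_2h assms(5)[unfolded zig_def]] by simp
  then have "zigzag a = zigzag b" by simp
  moreover have "\<not> a < b" using zigzag_abs_mono[of a b] assms(1) \<open>zigzag a = zigzag b\<close> by auto
  moreover have "\<not> b < a" using zigzag_abs_mono[of b a] assms(3) \<open>zigzag a = zigzag b\<close> by auto
  ultimately show ?thesis by simp
qed

lemma component_eq: "component = zig ` {1..k}"
proof
  show "zig ` {1..k} \<subseteq> component" using zig_in_component by auto
  show "component \<subseteq> zig ` {1..k}"
  proof
    fix v assume "v \<in> component"
    then obtain j where j: "0 \<le> j" "j \<le> int k - 1" "v = vertex k (c - j)" by (rule component_cw)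
    obtain q where "1 \<le> q" "q \<le> k" "zigzag q = j - h"
      using zigzag_surj[OF k_eq_2h, of "j - h"] j(1,2) k_eq_2h by auto
    then have "q \<in> {1..k}" "v = zig q" unfolding zig_def j(3) by simp_all
    then show "v \<in> zig ` {1..k}" by (rule rev_image_eqI)
  qed
qed

text \<open>The direction is forced: projections grow with the distance from the middle vertex \<open>c - h\<close>,
  so the zigzag index increases along root paths.\<close>
lemma root_path_direction:
  assumes "y \<in> component" "y \<noteq> vertex k c"
  obtains m where "\<And>x. proj k m x = - unit_cos k (3 * (x - c) + 3 * h - 1)"
    "sorted_wrt (<) (map (\<lambda>p. inner p (dir k m)) (root_path y))"
proof -
  obtain j where j: "0 \<le> j" "j \<le> int k - 1" "y = vertex k (c - j)" using component_cw[OF assms(1)] .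
  have "1 \<le> j" using j assms(2) by (cases "j = 0") auto
  have y: "vertex k (c - j) \<in> component" "vertex k (c - j) \<noteq> vertex k c" using assms j(3) by simp_all
  have "vertex k (c + 1) \<notin> component" using ccw_not_in_component[of 1] k_pos by simp
  then obtain m where m: "proj k m (c - j) < proj k m c" "proj k m c < 0" "0 < proj k m (c + 1)"
    and sorted: "sorted_wrt (<) (map (\<lambda>p. inner p (dir k m)) (root_path (vertex k (c - j))))"
    by (rule increasing_across[OF y])
  show thesis
  proof (rule that)
    show "proj k m x = - unit_cos k (3 * (x - c) + 3 * h - 1)" for x
      by (rule cw_crossing_direction[OF k_pos k_eq_2h \<open>1 \<le> j\<close> j(2) m])
  qed (use sorted j(3) in simp)
qed

lemma root_path_order:
  assumes "y \<in> component" "y \<noteq> vertex k c" "i < j" "j < depth y"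
    and "1 \<le> a" "a \<le> k" "1 \<le> b" "b \<le> k" "root_path y ! i = zig a" "root_path y ! j = zig b"
  shows "a < b"
proof -
  obtain m where m: "\<And>x. proj k m x = - unit_cos k (3 * (x - c) + 3 * h - 1)"
    and sorted: "sorted_wrt (<) (map (\<lambda>p. inner p (dir k m)) (root_path y))"
    using root_path_direction[OF assms(1,2)] by metis
  have inner: "inner (zig q) (dir k m) = - unit_cos k (3 * zigzag q + 1)" for q
  proof -
    have "3 * (c - h - zigzag q - c) + 3 * h - 1 = - (3 * zigzag q + 1)" by simp
    then show ?thesis unfolding inner_zig m by (simp only: unit_cos_minus)
  qed
  have range: "\<bar>3 * zigzag q + 1\<bar> \<le> 3 * int k" if "1 \<le> q" "q \<le> k" for q
    using zigzag_bounds[OF that] by (simp add: abs_le_iff)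
  have "inner (zig a) (dir k m) < inner (zig b) (dir k m)"
    using sorted_wrt_nth_less[OF sorted, of i j] assms(3,4,9,10) by simp
  then have "\<bar>3 * zigzag a + 1\<bar> < \<bar>3 * zigzag b + 1\<bar>"
    unfolding inner using unit_cos_less_iff[OF k_pos range[OF assms(7,8)] range[OF assms(5,6)]] by simp
  then show ?thesis using zigzag_abs_mono[OF assms(7), of a] by (cases a b rule: linorder_cases) auto
qed

lemma root_path_zig:
  assumes "y \<in> component" "p < depth y"
  obtains b where "1 \<le> b" "b \<le> k" "root_path y ! p = zig b"
proof -
  have y: "y \<in> Sk k" "branch_root y = vertex k c" using assms(1) unfolding component_def by auto
  have "root_path y ! p \<in> set (root_path y)" using assms(2) by simp
  then have "root_path y ! p \<in> component"
    using root_path_nth_in[OF y(1) assms(2)] branch_root_root_path[OF y(1)] y(2) unfolding component_def by simp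
  then show thesis unfolding component_eq by (elim imageE) (use that in auto)
qed

lemma zig_neq_c:
  assumes "1 \<le> a" "a < k"
  shows "zig a \<noteq> vertex k c"
proof
  assume "zig a = vertex k c"
  then have "zig a = zig k" using zig_k by simp
  then show False using zig_inj[of a k] assms by simp
qed

lemma parent_zig_between:
  assumes "1 \<le> a" "a < b" "b \<le> k" "zig b \<in> set (root_path (zig a))"
  shows "\<exists>q. a < q \<and> q \<le> b \<and> parent (zig a) = zig q"
proof -
  have ya: "zig a \<in> component" "zig a \<noteq> vertex k c" using zig_in_component zig_neq_c assms by auto
  obtain p where p: "p < depth (zig a)" "root_path (zig a) ! p = zig b"
    using in_root_path_conv_nth[OF zig_in_Sk assms(4) zig_neq_origin] .
  have "p \<noteq> 0"
  proof
    assume "p = 0"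
    then have "zig a = zig b" using p(2) root_path_0[of "zig a"] by simp
    then show False using zig_inj[of a b] assms by simp
  qed
  then have one: "1 < depth (zig a)" using p by simp
  obtain q where q: "1 \<le> q" "q \<le> k" "root_path (zig a) ! 1 = zig q" using root_path_zig[OF ya(1) one] .
  have parent: "root_path (zig a) ! 1 = parent (zig a)" using root_path_Suc[of 0 "zig a"] one root_path_0 by simp
  have "a < q" using root_path_order[OF ya _ one _ _ q(1,2) root_path_0 q(3)] assms by simp
  moreover have "q \<le> b"
  proof (cases "p = 1")
    case True
    then have "zig q = zig b" using p(2) q(3) by simp
    then show ?thesis using zig_inj[of q b] q assms(1-3) by simp
  next
    case False
    then show ?thesis using root_path_order[OF ya _ p(1) q(1,2) _ _ q(3) p(2)] \<open>p \<noteq> 0\<close> assms by simp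
  qed
  ultimately show ?thesis using q(3) parent by (intro exI[of _ q]) simp
qed

lemma edge_zig: "parent (zig a) = zig b \<Longrightarrow> {zig a, zig b} \<in> E \<and> {zig b, zig a} \<in> E"
  using edge_parent[OF zig_in_Sk zig_neq_origin, of a] by simp

lemma zig_path_increasing:
  assumes "distinct qs" "set qs \<subseteq> {1..k}" "qs \<noteq> []" "successively (\<lambda>a b. {zig a, zig b} \<in> E) qs"
  obtains m where "sorted_wrt (<) (map (\<lambda>q. proj k m (c - h - zigzag q)) qs)"
proof -
  have "inj_on zig {1..k}" using zig_inj by (auto intro: inj_onI)
  then have "distinct (map zig qs)" using assms(1,2) by (simp add: distinct_map inj_on_subset)
  then have "is_path (Sk k) E (map zig qs) (zig (hd qs)) (zig (last qs))"
    using assms(3,4) zig_in_Sk unfolding is_path_iff by (auto simp: hd_map last_map successively_map)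
  then obtain m where "sorted_wrt (<) (map (\<lambda>p. inner p (dir k m)) (map zig qs))" by (rule path_increasing)
  then show thesis using that[of m] by (simp add: comp_def inner_zig)
qed

text \<open>The invariant of a downward induction starting at \<open>n = k\<close>, where \<open>zig k\<close> is the branch root.\<close>
definition on_root_paths :: "nat \<Rightarrow> bool" where
  "on_root_paths n \<longleftrightarrow> (\<forall>i. 1 \<le> i \<longrightarrow> i < n \<longrightarrow> zig n \<in> set (root_path (zig i)))"

lemma parent_zig_if_on_root_paths:
  assumes "1 \<le> n" "n < k" "on_root_paths (n + 1)"
  shows "parent (zig n) = zig (n + 1)"
proof -
  have "zig (n + 1) \<in> set (root_path (zig n))" using assms unfolding on_root_paths_def by simp
  moreover have "n < n + 1" "n + 1 \<le> k" using assms by auto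
  ultimately obtain q where "n < q" "q \<le> n + 1" "parent (zig n) = zig q"
    using parent_zig_between[OF assms(1)] by blast
  then show ?thesis by (metis le_antisym Suc_eq_plus1 Suc_leI)
qed

lemma parent_no_skip:
  assumes "2 \<le> n" "n < k" "on_root_paths (n + 1)" "parent (zig n) = zig (n + 1)"
  shows "parent (zig (n - 1)) \<noteq> zig (n + 1)"
proof
  assume skip: "parent (zig (n - 1)) = zig (n + 1)"
  show False
  proof (cases "n = 2")
    case True
    obtain m where "sorted_wrt (<) (map (\<lambda>q. proj k m (c - h - zigzag q)) [1, 3, 2])"
      by (rule zig_path_increasing[of "[1, 3, 2]"]) (use True assms(2) edge_zig[OF skip] edge_zig[OF assms(4)] in auto)
    then show False using zigzag_not_increasing_1_3_2[OF k_pos k_eq_2h, where m = m and c = c] True assms(2) by simp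
  next
    case False
    then have n3: "3 \<le> n" using assms(1) by simp
    have n_le: "n \<le> k - 1" using assms(2) by linarith
    have "zig (n + 1) \<in> set (root_path (zig (n - 2)))" using n3 assms(3) unfolding on_root_paths_def by simp
    moreover have "1 \<le> n - 2" "n - 2 < n + 1" "n + 1 \<le> k" using n3 assms(2) by auto
    ultimately obtain q2 where q2: "n - 2 < q2" "q2 \<le> n + 1" "parent (zig (n - 2)) = zig q2"
      using parent_zig_between[of "n - 2" "n + 1"] by blast
    then consider "q2 = n + 1" | "q2 = n" | "q2 = n - 1" by linarith
    then show False
    proof cases
      case 1
      obtain m where "sorted_wrt (<) (map (\<lambda>q. proj k m (c - h - zigzag q)) [n - 2, n + 1, n])"
        by (rule zig_path_increasing[of "[n - 2, n + 1, n]"])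
          (use n3 assms(2) edge_zig[OF q2(3)[unfolded 1]] edge_zig[OF assms(4)] in auto)
      then show False using zigzag_not_increasing_m2_p1_0[OF k_pos k_eq_2h n3 n_le, where m = m and c = c] by simp
    next
      case 2
      obtain m where "sorted_wrt (<) (map (\<lambda>q. proj k m (c - h - zigzag q)) [n - 2, n, n + 1, n - 1])"
        by (rule zig_path_increasing[of "[n - 2, n, n + 1, n - 1]"])
          (use n3 assms(2) edge_zig[OF q2(3)[unfolded 2]] edge_zig[OF assms(4)] edge_zig[OF skip] in auto)
      then show False using zigzag_not_increasing_m2_0_p1_m1[OF k_pos k_eq_2h n3 n_le, where m = m and c = c] by simp
    next
      case 3
      obtain m where "sorted_wrt (<) (map (\<lambda>q. proj k m (c - h - zigzag q)) [n - 2, n - 1, n + 1, n])"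
        by (rule zig_path_increasing[of "[n - 2, n - 1, n + 1, n]"])
          (use n3 assms(2) edge_zig[OF q2(3)[unfolded 3]] edge_zig[OF assms(4)] edge_zig[OF skip] in auto)
      then show False using zigzag_not_increasing_m2_m1_p1_0[OF k_pos k_eq_2h n3 n_le, where m = m and c = c] by simp
    qed
  qed
qed

lemma parent_predecessor:
  assumes "2 \<le> n" "n < k" "on_root_paths (n + 1)" "parent (zig n) = zig (n + 1)"
  shows "parent (zig (n - 1)) = zig n"
proof -
  have "zig (n + 1) \<in> set (root_path (zig (n - 1)))" using assms(1,3) unfolding on_root_paths_def by simp
  moreover have "1 \<le> n - 1" "n - 1 < n + 1" "n + 1 \<le> k" using assms(1,2) by auto
  ultimately obtain q1 where q1: "n - 1 < q1" "q1 \<le> n + 1" "parent (zig (n - 1)) = zig q1"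
    using parent_zig_between[of "n - 1" "n + 1"] by blast
  have "parent (zig (n - 1)) \<noteq> zig (n + 1)" by (rule parent_no_skip[OF assms])
  then have "q1 = n" using q1 assms(1) by (cases "q1 = n + 1") auto
  then show ?thesis using q1(3) by simp
qed

lemma no_second_child:
  assumes "2 \<le> n" "n < k" "on_root_paths (n + 1)" "parent (zig n) = zig (n + 1)"
    and "1 \<le> q" "q < n" "parent (zig q) = zig (n + 1)"
  shows False
proof -
  have pred: "parent (zig (n - 1)) = zig n" by (rule parent_predecessor[OF assms(1-4)])
  have "q \<noteq> n - 1"
  proof
    assume "q = n - 1"
    then have "zig n = zig (n + 1)" using pred assms(7) by simp
    then show False using zig_inj[of n "n + 1"] assms(1,2) by simp
  qed
  then have q: "q \<le> n - 2" using assms(6) by simp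
  obtain m where "sorted_wrt (<) (map (\<lambda>q. proj k m (c - h - zigzag q)) [q, n + 1, n, n - 1])"
    by (rule zig_path_increasing[of "[q, n + 1, n, n - 1]"])
      (use assms(1,2,5) q edge_zig[OF assms(7)] edge_zig[OF assms(4)] edge_zig[OF pred] in auto)
  moreover have "n \<le> k - 1" using assms(2) by linarith
  ultimately show False using zigzag_not_increasing_q_p1_0_m1[OF k_pos k_eq_2h assms(1) _ assms(5) q, where m = m and c = c]
    by simp
qed

lemma on_root_paths_pred:
  assumes "2 \<le> n" "n < k" "on_root_paths (n + 1)"
  shows "on_root_paths n"
  unfolding on_root_paths_def
proof (intro allI impI)
  fix i assume i: "1 \<le> i" "i < n"
  show "zig n \<in> set (root_path (zig i))"
  proof (rule ccontr)
    assume not_on: "zig n \<notin> set (root_path (zig i))"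
    have parent_n: "parent (zig n) = zig (n + 1)" using parent_zig_if_on_root_paths assms by simp
    have y: "zig i \<in> component" "zig i \<noteq> vertex k c" using zig_in_component zig_neq_c i assms(2) by auto
    have "zig (n + 1) \<in> set (root_path (zig i))" using assms(3) i unfolding on_root_paths_def by simp
    then obtain p where p: "p < depth (zig i)" "root_path (zig i) ! p = zig (n + 1)"
      using in_root_path_conv_nth[OF zig_in_Sk _ zig_neq_origin] by blast
    have "p \<noteq> 0"
    proof
      assume "p = 0"
      then have "zig i = zig (n + 1)" using p(2) root_path_0[of "zig i"] by simp
      then show False using zig_inj[of i "n + 1"] i assms(2) by simp
    qed
    have "p - 1 < depth (zig i)" using p(1) by simp
    then obtain q where q: "1 \<le> q" "q \<le> k" "root_path (zig i) ! (p - 1) = zig q"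
      by (rule root_path_zig[OF y(1)])
    have parent_q: "parent (zig q) = zig (n + 1)"
      using root_path_Suc[of "p - 1" "zig i"] p q(3) \<open>p \<noteq> 0\<close> by simp
    have "q < n + 1"
    proof (cases "p - 1 = 0")
      case True
      then have "zig q = zig i" using q(3) root_path_0[of "zig i"] by simp
      then show ?thesis using zig_inj[of q i] q(1,2) i assms(2) by simp
    next
      case False
      then show ?thesis using root_path_order[OF y _ p(1) q(1,2) _ _ q(3) p(2)] assms(2) by simp
    qed
    moreover have "q \<noteq> n" using not_on q(3) p(1) nth_mem[of "p - 1" "root_path (zig i)"] by auto
    ultimately show False using no_second_child[OF assms parent_n q(1) _ parent_q] by simp
  qed
qed

lemma on_root_paths_all:
  assumes "2 \<le> n" "n \<le> k"
  shows "on_root_paths n"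
  using assms(2)
proof (induction n rule: inc_induct)
  case base
  show ?case unfolding on_root_paths_def
  proof (intro allI impI)
    fix i assume "1 \<le> i" "i < k"
    then have "branch_root (zig i) = vertex k c" using zig_in_component unfolding component_def by simp
    then show "zig k \<in> set (root_path (zig i))"
      using branch_root_in_root_path[OF zig_in_Sk zig_neq_origin, of i] zig_k by simp
  qed
next
  case (step m)
  then show ?case using on_root_paths_pred[of m] assms(1) by simp
qed

lemma parent_zig: "1 \<le> n \<Longrightarrow> n < k \<Longrightarrow> parent (zig n) = zig (Suc n)"
  using parent_zig_if_on_root_paths on_root_paths_all[of "n + 1"] by simp

lemma dist_zig:
  assumes "1 \<le> n" "n < k"
  shows "dist (zig n) (zig (Suc n)) = 2 * sin (real n * pi / (2 * real k))"
proof -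
  have "zigzag (Suc n) - zigzag n = int n \<or> zigzag (Suc n) - zigzag n = - int n"
    using zigzag_Suc_diff[OF assms(1)] by linarith
  then have "cos (of_int (zigzag (Suc n) - zigzag n) * pi / real k) = cos (of_int (int n) * pi / real k)"
  proof
    assume "zigzag (Suc n) - zigzag n = - int n"
    then show ?thesis by (simp only: of_int_minus mult_minus_left minus_divide_left[symmetric] cos_minus)
  qed (simp only:)
  moreover have "c - h - zigzag n - (c - h - zigzag (Suc n)) = zigzag (Suc n) - zigzag n" by simp
  ultimately show ?thesis
    unfolding zig_def dist_vertices[OF k_pos] using chord_length[OF k_pos, of "int n"] assms by simp
qed

lemma card_component: "card component = k"
proof -
  have "inj_on zig {1..k}" using zig_inj by (auto intro: inj_onI)
  then show ?thesis unfolding component_eq by (simp add: card_image)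
qed

lemma component_length: "real k < (\<Sum>v\<in>component. dist v (parent v))"
proof -
  have "inj_on zig {1..k}" using zig_inj by (auto intro: inj_onI)
  then have "(\<Sum>v\<in>component. dist v (parent v)) = (\<Sum>n\<in>{1..k}. dist (zig n) (parent (zig n)))"
    unfolding component_eq by (simp add: sum.reindex)
  also have "{1..k} = insert k {1..k-1}" using two_le_k by auto
  also have "(\<Sum>n\<in>insert k {1..k-1}. dist (zig n) (parent (zig n)))
      = dist (zig k) (parent (zig k)) + (\<Sum>n\<in>{1..k-1}. dist (zig n) (parent (zig n)))"
    using two_le_k by (intro sum.insert) auto
  also have "\<dots> = 1 + (\<Sum>n\<in>{1..k-1}. 2 * sin (real n * pi / (2 * real k)))"
    using dist_zig parent_zig zig_k parent_c dist_vertex_origin[OF k_pos] by (auto intro!: sum.cong)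
  finally show ?thesis using sum_chords_gt[OF two_le_k] by simp
qed

end

context monotone_graph
begin

lemma branch_length:
  assumes "c \<in> branch_root ` (Sk k - {(0, 0)})"
  defines "F \<equiv> {v \<in> Sk k - {(0, 0)}. branch_root v = c}"
  shows "real (card F) \<le> (\<Sum>v\<in>F. dist v (parent v))"
    and "F \<noteq> {c} \<Longrightarrow> real (card F) < (\<Sum>v\<in>F. dist v (parent v))"
proof -
  obtain v where v: "v \<in> Sk k" "v \<noteq> (0, 0)" "c = branch_root v" using assms(1) by blast
  have root: "c \<in> Sk k" "c \<noteq> (0, 0)" "parent c = (0, 0)"
    using branch_root_in[OF v(1,2)] branch_root_neq_root[OF v(1,2)] parent_branch_root[OF v(1,2)] v(3) by simp_all
  obtain x where c: "c = vertex k x" using root(1,2) by (auto elim: Sk_cases)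
  interpret branch k E x using root(3) c by unfold_locales simp
  have F: "F = component" unfolding F_def component_def c by blast
  have long: "real (card F) < (\<Sum>v\<in>F. dist v (parent v))" if "F \<noteq> {c}"
  proof -
    interpret long_branch k E x using that F c by unfold_locales simp
    show ?thesis unfolding F using component_length card_component by simp
  qed
  show "real (card F) \<le> (\<Sum>v\<in>F. dist v (parent v))"
  proof (cases "F = {c}")
    case True
    then show ?thesis using root(3) dist_vertex_origin[OF k_pos] c by simp
  qed (use long in simp)
  show "F \<noteq> {c} \<Longrightarrow> real (card F) < (\<Sum>v\<in>F. dist v (parent v))" by (rule long)
qed

lemma tree_length_gt:
  assumes "E \<noteq> star k"
  shows "real (2 * k) < tree_length E"
proof -
  define P where "P = Sk k - {(0, 0)}"
  define F where "F c = {v \<in> P. branch_root v = c}" for c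
  have finP: "finite P" unfolding P_def Sk_def by simp
  have "(\<Sum>c\<in>branch_root ` P. real (card (F c))) = real (card P)"
    using sum.group[OF finP, of "branch_root ` P" branch_root "\<lambda>_. 1 :: real"] finP
    unfolding F_def by simp
  also have "\<dots> = real (2 * k)" unfolding P_def using card_polygon[OF k_pos even_k] by simp
  finally have card: "(\<Sum>c\<in>branch_root ` P. real (card (F c))) = real (2 * k)" .
  have sum: "(\<Sum>c\<in>branch_root ` P. \<Sum>v\<in>F c. dist v (parent v)) = (\<Sum>v\<in>P. dist v (parent v))"
    using sum.group[OF finP, of "branch_root ` P" branch_root] finP unfolding F_def by simp
  have le: "real (card (F c)) \<le> (\<Sum>v\<in>F c. dist v (parent v))" if "c \<in> branch_root ` P" for c
    using branch_length(1)[of c] that unfolding F_def P_def by simp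
  show ?thesis
  proof (cases "\<exists>c\<in>branch_root ` P. F c \<noteq> {c}")
    case True
    then obtain c where c: "c \<in> branch_root ` P" "F c \<noteq> {c}" by blast
    then have "real (card (F c)) < (\<Sum>v\<in>F c. dist v (parent v))"
      using branch_length(2)[of c] c unfolding F_def P_def by simp
    then have "(\<Sum>c\<in>branch_root ` P. real (card (F c))) < (\<Sum>c\<in>branch_root ` P. \<Sum>v\<in>F c. dist v (parent v))"
      using le c(1) finP by (intro sum_strict_mono_ex1) auto
    then show ?thesis using card sum parent_edges_length unfolding P_def by simp
  next
    case False
    have "parent v = (0, 0)" if v: "v \<in> P" for v
    proof -
      have "v \<in> F (branch_root v)" "branch_root v \<in> branch_root ` P" unfolding F_def using v by auto
      then have "v = branch_root v" using False by blast
      then show ?thesis using parent_branch_root[of v] v unfolding P_def by simp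
    qed
    then have "star k \<subseteq> E"
      using parent_edge unfolding star_eq[OF k_pos] P_def by (auto simp: insert_commute)
    with assms have "tree_length (star k) < tree_length E"
      by (intro tree_length_psubset[OF graph finite_E]) auto
    then show ?thesis using tree_length_star[OF k_pos even_k] by simp
  qed
qed

end

theorem theorem3:
  fixes k :: nat
  assumes "even k" and "k \<ge> 2"
  shows "spanning_tree (Sk k) (star k) \<and> Dmonotone (dirs k) (Sk k) (star k)
       \<and> (\<forall>E. spanning_tree (Sk k) E \<and> Dmonotone (dirs k) (Sk k) E \<and> E \<noteq> star k
              \<longrightarrow> tree_length (star k) < tree_length E)
       \<and> degree (star k) (0,0) = 2 * k"
proof (intro conjI allI impI)
  have k: "0 < k" using assms(2) by simp
  obtain h where h: "int k = 2 * h" using assms(1) by (metis evenE of_nat_mult of_nat_numeral)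
  show "spanning_tree (Sk k) (star k)" using star_spanning_tree[OF k] .
  show "Dmonotone (dirs k) (Sk k) (star k)" using star_Dmonotone[OF k h] .
  show "degree (star k) (0, 0) = 2 * k" using degree_star[OF k assms(1)] .
  fix E assume E: "spanning_tree (Sk k) E \<and> Dmonotone (dirs k) (Sk k) E \<and> E \<noteq> star k"
  interpret monotone_graph k E
    using assms E unfolding spanning_tree_def by unfold_locales (auto simp: Sk_def)
  show "tree_length (star k) < tree_length E"
    using tree_length_gt E tree_length_star[OF k assms(1)] by simp
qed

end
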